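(* Let $(x_n)_{n\ge1}$ be a sequence of real numbers such that $x_{n+1}-x_n\ge\frac{c\log n}{n}$ for some constant $c>0$, and suppose that for some $\varepsilon_0>0$ and some constant $r>0$ we have, for all $N$, $$E^{*}(X,N,\gamma_N)\ge rN^3,\qquad \gamma_N=\frac{1}{N(\log N)^{1+\varepsilon_0}}.$$ Then there exist increasing sequences of positive integers $(n_k)_{k\ge1}$ and $(a_N)_{N\ge1}$ tending to infinity such that $(n_k)$ has density bounded from below in $\{1,\dots,a_N\}$ (i.e. there is $c'>0$ with $\#\{k:n_k\le a_N\}\ge c'a_N$ for all $N$), and for every $\varepsilon>0$ and almost every $\alpha\in\mathbb{R}$, $$\min\big\{\|\alpha x_{n_k}-\alpha x_{n_l}\| : k\ne l,\ n_k,n_l\le a_N\big\}\gg\frac{1}{a_N(\log a_N)^{1+\varepsilon}}.$$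
   Context: $E^{*}(X,N,\gamma)=\#\{(n_1,n_2,n_3,n_4)\in[1,N]^4 : |x_{n_1}+x_{n_2}-x_{n_3}-x_{n_4}|<\gamma\}$ is the additive energy of $X=(x_n)$ at scale $\gamma$. For $x\in\mathbb{R}$, $\|x\|=\min_{k\in\mathbb{Z}}|x-k|$. The implied constant in the conclusion may depend on $\alpha$ and $\varepsilon$. *)

theory Defs
  imports "HOL-Analysis.Analysis"
begin

definition dist_int :: "real \<Rightarrow> real" where
  "dist_int x = (INF k::int. \<bar>x - of_int k\<bar>)"

definition add_energy :: "(nat \<Rightarrow> real) \<Rightarrow> nat \<Rightarrow> real \<Rightarrow> nat" where
  "add_energy x N \<gamma> = card {(n1, n2, n3, n4). n1 \<in> {1..N} \<and> n2 \<in> {1..N} \<and> n3 \<in> {1..N} \<and> n4 \<in> {1..N}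
       \<and> \<bar>x n1 + x n2 - x n3 - x n4\<bar> < \<gamma>}"

end

theory Submission
  imports Defs
begin

text \<open>At level N, take \<gamma> = 1/(N (ln N)^(1+\<epsilon>0)). The gap condition puts the points x 2, ..., x N
  into distinct cells of the lattice \<gamma>\<int>, so the energy hypothesis becomes large additive energy
  of a set of N integers, and the Balog-Szemeredi-Gowers theorem yields a set B of \<ge> c' N
  indices whose differences x i - x j all lie within \<gamma> of \<gamma> V for a set V of only O(N)
  integers. Such blocks B N \<subseteq> (a (N-1), a N] are taken at super-exponentially growing scales
  a N. At level N only O(a N) lattice points \<gamma> v and O(a N a (N-1)) differences involving an
  earlier index matter, and the set of \<alpha> resonating with one of them to precision
  1/(a N (ln a N)^(1+\<epsilon>)) has measure O(a (N-1)/ln a N), which is summable. Borel-Cantelli then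
  separates all new pairs for large N, and the finitely many remaining pairs only affect the
  constant.\<close>

section \<open>Double counting\<close>

lemma card_product_filter_sum_fst:
  assumes "finite A" "finite B"
  shows "card {p \<in> A \<times> B. R (fst p) (snd p)} = (\<Sum>a\<in>A. card {b\<in>B. R a b})"
proof -
  have "{p \<in> A \<times> B. R (fst p) (snd p)} = (SIGMA a:A. {b\<in>B. R a b})" by auto
  then show ?thesis using assms by simp
qed

lemma card_product_filter_sum_snd:
  assumes "finite A" "finite B"
  shows "card {p \<in> A \<times> B. R (fst p) (snd p)} = (\<Sum>b\<in>B. card {a\<in>A. R a b})"
proof -
  have "card {p \<in> A \<times> B. R (fst p) (snd p)} = card {p \<in> B \<times> A. R (snd p) (fst p)}"
    by (rule bij_betw_same_card[of "\<lambda>(a,b). (b,a)"]) (auto simp: bij_betw_def inj_on_def image_def)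
  also have "\<dots> = (\<Sum>b\<in>B. card {a\<in>A. R a b})"
    using card_product_filter_sum_fst[OF assms(2,1), of "\<lambda>b a. R a b"] by simp
  finally show ?thesis .
qed

lemma exists_ge_average:
  fixes f :: "'a \<Rightarrow> real"
  assumes "finite B" "B \<noteq> {}" "sum f B \<ge> real (card B) * t"
  shows "\<exists>b\<in>B. f b \<ge> t"
proof (rule ccontr)
  assume "\<not> ?thesis"
  then have "sum f B < of_nat (card B) * t"
    by (intro sum_bounded_above_strict) (use assms in auto)
  with assms show False by simp
qed

lemma card_triples_le:
  assumes fA: "finite A" and fibre: "\<And>u v. u\<in>A \<Longrightarrow> v\<in>A \<Longrightarrow> card {w\<in>A. R u v w} \<le> k"
  shows "card {(u,v,w). u\<in>A \<and> v\<in>A \<and> w\<in>A \<and> R u v w} \<le> k * card A * card A"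
proof -
  define Sg where "Sg = (SIGMA p:A\<times>A. {w\<in>A. R (fst p) (snd p) w})"
  have fSg: "finite Sg" unfolding Sg_def using fA by (intro finite_SigmaI) auto
  have "{(u,v,w). u\<in>A \<and> v\<in>A \<and> w\<in>A \<and> R u v w} = (\<lambda>((u,v),w). (u,v,w)) ` Sg"
    by (force simp: Sg_def image_iff)
  then have "card {(u,v,w). u\<in>A \<and> v\<in>A \<and> w\<in>A \<and> R u v w} \<le> card Sg"
    by (simp add: card_image_le fSg)
  also have "\<dots> = (\<Sum>p\<in>A\<times>A. card {w\<in>A. R (fst p) (snd p) w})" using fA by (simp add: Sg_def)
  also have "\<dots> \<le> (\<Sum>p\<in>A\<times>A. k)" by (intro sum_mono) (auto intro: fibre)
  also have "\<dots> = k * card A * card A" by (simp add: card_cartesian_product)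
  finally show ?thesis .
qed

lemma card_gt_mult_le_sum:
  fixes f :: "'a \<Rightarrow> real"
  assumes "finite U" "\<And>u. u \<in> U \<Longrightarrow> f u \<ge> 0" "t \<ge> 0"
  shows "real (card {u\<in>U. f u > t}) * t \<le> sum f U"
proof -
  have "real (card {u\<in>U. f u > t}) * t = (\<Sum>u\<in>{u\<in>U. f u > t}. t)" by simp
  also have "\<dots> \<le> (\<Sum>u\<in>{u\<in>U. f u > t}. f u)" by (intro sum_mono) auto
  also have "\<dots> \<le> sum f U" using assms by (intro sum_mono2) auto
  finally show ?thesis .
qed

lemma card_ge_mult_ge_sum:
  fixes f :: "'a \<Rightarrow> real" and M t :: real
  assumes "finite B" "\<And>b. b \<in> B \<Longrightarrow> f b \<le> M" "t \<ge> 0"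
  shows "real (card {b\<in>B. f b \<ge> t}) * M \<ge> sum f B - real (card B) * t"
proof -
  define W where "W = {b\<in>B. f b \<ge> t}"
  have "sum f B = sum f W + sum f (B - W)"
    using sum.subset_diff[of W B f] assms(1) by (simp add: W_def)
  moreover have "sum f W \<le> real (card W) * M"
    using sum_bounded_above[of W f M] assms(2) by (auto simp: W_def)
  moreover have "sum f (B - W) \<le> real (card (B - W)) * t"
    by (rule sum_bounded_above) (auto simp: W_def)
  moreover have "real (card (B - W)) * t \<le> real (card B) * t"
    using assms(1,3) by (intro mult_right_mono) (auto intro: card_mono)
  ultimately show ?thesis by (simp add: W_def)
qed

section \<open>The Balog-Szemeredi-Gowers theorem\<close>

lemma exists_neighbourhood_few_sparse_pairs:
  fixes G :: "('a \<times> 'b) set" and \<delta> nA :: real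
  assumes fA: "finite A" and fB: "finite B" and B_ne: "B \<noteq> {}" and \<delta>_pos: "0 < \<delta>"
    and cA: "real (card A) \<le> nA"
    and deg: "(\<Sum>a\<in>A. real (card {b\<in>B. (a,b)\<in>G})) \<ge> \<delta> * nA * card B / 2"
  shows "\<exists>U \<subseteq> A. real (card U) \<ge> \<delta> * nA / 3 \<and>
     real (card {p \<in> U \<times> U. real (card {b\<in>B. (fst p,b)\<in>G \<and> (snd p,b)\<in>G}) < \<delta>^3/128 * card B})
       \<le> \<delta> * card U ^ 2 / 16"
proof -
  define nB where "nB = real (card B)"
  have nB_pos: "nB > 0" using fB B_ne by (simp add: nB_def card_gt_0_iff)
  have nA_nonneg: "nA \<ge> 0" using cA by linarith
  define \<tau> where "\<tau> = \<delta>^3 / 128"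
  define nbhd where "nbhd b = {a\<in>A. (a,b)\<in>G}" for b
  define com where "com a1 a2 = {b\<in>B. (a1,b)\<in>G \<and> (a2,b)\<in>G}" for a1 a2
  define sparse where "sparse = {p \<in> A \<times> A. real (card (com (fst p) (snd p))) < \<tau> * nB}"
  define sparse_at where "sparse_at b = {p \<in> sparse. b \<in> com (fst p) (snd p)}" for b
  have f_sparse: "finite sparse" using fA by (auto simp: sparse_def)
  have sum_sq: "(\<Sum>b\<in>B. real (card (nbhd b))^2) \<ge> \<delta>^2 * nA^2 * nB / 4"
  proof -
    have "(\<Sum>b\<in>B. card (nbhd b)) = (\<Sum>a\<in>A. card {b\<in>B. (a,b)\<in>G})"
      unfolding nbhd_def using card_product_filter_sum_snd[OF fA fB, of "\<lambda>a b. (a,b)\<in>G"]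
        card_product_filter_sum_fst[OF fA fB, of "\<lambda>a b. (a,b)\<in>G"] by simp
    then have "(\<Sum>b\<in>B. real (card (nbhd b))) = (\<Sum>a\<in>A. real (card {b\<in>B. (a,b)\<in>G}))"
      by (simp flip: of_nat_sum)
    then have "(\<Sum>b\<in>B. real (card (nbhd b))) \<ge> \<delta> * nA * nB / 2"
      using deg unfolding nB_def by simp
    then have "(\<delta> * nA * nB / 2)^2 \<le> (\<Sum>b\<in>B. real (card (nbhd b)))^2"
      using \<delta>_pos nA_nonneg nB_pos by (intro power_mono) auto
    also have "\<dots> \<le> (\<Sum>b\<in>B. real (card (nbhd b))^2) * nB"
      unfolding nB_def by (rule sum_squared_le_sum_of_squares)
    also have "(\<delta> * nA * nB / 2)^2 = (\<delta>^2 * nA^2 * nB / 4) * nB"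
      by (simp add: power2_eq_square)
    finally show ?thesis using nB_pos by (simp add: mult_le_cancel_right)
  qed
  have sum_sparse: "(\<Sum>b\<in>B. real (card (sparse_at b))) \<le> nA^2 * \<tau> * nB"
  proof -
    have "(\<Sum>b\<in>B. card (sparse_at b)) = (\<Sum>p\<in>sparse. card {b\<in>B. b \<in> com (fst p) (snd p)})"
      unfolding sparse_at_def
      using card_product_filter_sum_snd[OF f_sparse fB, of "\<lambda>p b. b \<in> com (fst p) (snd p)"]
        card_product_filter_sum_fst[OF f_sparse fB, of "\<lambda>p b. b \<in> com (fst p) (snd p)"] by simp
    also have "\<dots> = (\<Sum>p\<in>sparse. card (com (fst p) (snd p)))"
      by (intro sum.cong) (auto simp: com_def)
    finally have "(\<Sum>b\<in>B. real (card (sparse_at b))) = (\<Sum>p\<in>sparse. real (card (com (fst p) (snd p))))"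
      by (simp flip: of_nat_sum)
    also have "\<dots> \<le> (\<Sum>p\<in>sparse. \<tau> * nB)"
      by (rule sum_mono) (auto simp: sparse_def)
    also have "\<dots> \<le> nA^2 * (\<tau> * nB)"
    proof -
      have "card sparse \<le> card (A \<times> A)" using fA by (intro card_mono) (auto simp: sparse_def)
      also have "\<dots> = card A * card A" by (simp add: card_cartesian_product)
      finally have "real (card sparse) \<le> real (card A) * real (card A)" by (simp flip: of_nat_mult)
      also have "\<dots> \<le> nA * nA" using cA by (intro mult_mono) auto
      finally have "real (card sparse) \<le> nA^2" by (simp add: power2_eq_square)
      then show ?thesis using \<delta>_pos nB_pos by (simp add: \<tau>_def mult_right_mono)
    qed
    finally show ?thesis by simp
  qed
  \<comment> \<open>Averaging over the common vertex b: the neighbourhood of some b is large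
      while containing few sparse pairs.\<close>
  have "\<exists>b\<in>B. real (card (nbhd b))^2 - (16/\<delta>) * real (card (sparse_at b)) \<ge> \<delta>^2 * nA^2 / 8"
  proof (rule exists_ge_average[OF fB B_ne])
    have "(\<Sum>b\<in>B. real (card (nbhd b))^2 - (16/\<delta>) * real (card (sparse_at b)))
        = (\<Sum>b\<in>B. real (card (nbhd b))^2) - (16/\<delta>) * (\<Sum>b\<in>B. real (card (sparse_at b)))"
      by (simp add: sum_subtractf sum_distrib_left)
    moreover have "(16/\<delta>) * (\<Sum>b\<in>B. real (card (sparse_at b))) \<le> (16/\<delta>) * (nA^2 * \<tau> * nB)"
      using sum_sparse \<delta>_pos by (intro mult_left_mono) auto
    moreover have "\<delta>^2 * nA^2 * nB / 4 - (16/\<delta>) * (nA^2 * \<tau> * nB) = nB * (\<delta>^2 * nA^2 / 8)"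
      using \<delta>_pos by (simp add: \<tau>_def field_simps power2_eq_square power3_eq_cube)
    ultimately show "(\<Sum>b\<in>B. real (card (nbhd b))^2 - (16/\<delta>) * real (card (sparse_at b)))
        \<ge> real (card B) * (\<delta>^2 * nA^2 / 8)"
      using sum_sq unfolding nB_def by linarith
  qed
  then obtain b0 where b0: "b0 \<in> B"
    and b0_ineq: "real (card (nbhd b0))^2 - (16/\<delta>) * real (card (sparse_at b0)) \<ge> \<delta>^2 * nA^2 / 8"
    by blast
  define U where "U = nbhd b0"
  have "(16/\<delta>) * real (card (sparse_at b0)) \<ge> 0" using \<delta>_pos by simp
  then have "real (card U)^2 \<ge> \<delta>^2 * nA^2 / 8" using b0_ineq unfolding U_def by linarith
  moreover have "(\<delta> * nA / 3)^2 = \<delta>^2 * nA^2 / 9" by (simp add: power_mult_distrib power_divide)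
  moreover have "0 \<le> \<delta>^2 * nA^2" by simp
  ultimately have "(\<delta> * nA / 3)^2 \<le> real (card U)^2" by linarith
  then have U_big: "real (card U) \<ge> \<delta> * nA / 3"
    by (rule power2_le_imp_le) simp
  have "(16/\<delta>) * real (card (sparse_at b0)) \<le> real (card U)^2"
    using b0_ineq \<open>0 \<le> \<delta>^2 * nA^2\<close> unfolding U_def by linarith
  then have sparse_at_small: "real (card (sparse_at b0)) \<le> \<delta> * card U ^ 2 / 16"
    using \<delta>_pos by (simp add: field_simps)
  have "finite (sparse_at b0)" using f_sparse by (simp add: sparse_at_def)
  then have "card {p \<in> U \<times> U. real (card (com (fst p) (snd p))) < \<tau> * nB} \<le> card (sparse_at b0)"
    using b0 by (intro card_mono) (auto simp: sparse_at_def sparse_def U_def nbhd_def com_def)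
  then show ?thesis
    using sparse_at_small U_big unfolding com_def \<tau>_def nB_def
    by (intro exI[of _ U]) (auto simp: U_def nbhd_def)
qed

lemma bipartite_many_paths3:
  fixes G :: "('a \<times> 'b) set" and \<delta> :: real
  assumes fA: "finite A" and fB: "finite B" and GAB: "G \<subseteq> A \<times> B" and \<delta>_pos: "0 < \<delta>"
    and dense: "real (card G) \<ge> \<delta> * card A * card B" and ne: "A \<noteq> {}" "B \<noteq> {}"
  shows "\<exists>U W. U \<subseteq> A \<and> W \<subseteq> B \<and> real (card U) \<ge> \<delta> * card A / 6 \<and> real (card W) \<ge> \<delta> * card B / 4 \<and>
     (\<forall>u\<in>U. \<forall>w\<in>W. real (card {(b,a). b\<in>B \<and> a\<in>A \<and> (u,b)\<in>G \<and> (a,b)\<in>G \<and> (a,w)\<in>G})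
         \<ge> \<delta>^5 * card A * card B / 3072)"
proof -
  define nA where "nA = real (card A)"
  define nB where "nB = real (card B)"
  have nA_pos: "nA > 0" and nB_pos: "nB > 0" using ne fA fB by (auto simp: nA_def nB_def card_gt_0_iff)
  define deg where "deg a = card {b\<in>B. (a,b)\<in>G}" for a
  define A1 where "A1 = {a\<in>A. real (deg a) \<ge> \<delta> * nB / 2}"
  have fA1: "finite A1" "A1 \<subseteq> A" using fA by (auto simp: A1_def)
  have "(\<Sum>a\<in>A. real (deg a)) \<ge> \<delta> * nA * nB"
  proof -
    have "G = {p \<in> A \<times> B. (fst p, snd p) \<in> G}" using GAB by auto
    then have "card G = (\<Sum>a\<in>A. deg a)"
      unfolding deg_def using card_product_filter_sum_fst[OF fA fB, of "\<lambda>a b. (a,b) \<in> G"] by simp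
    then show ?thesis using dense by (simp add: nA_def nB_def)
  qed
  moreover have "(\<Sum>a\<in>A-A1. real (deg a)) \<le> real (card (A - A1)) * (\<delta> * nB / 2)"
    by (rule sum_bounded_above) (auto simp: A1_def)
  moreover have "real (card (A - A1)) * (\<delta> * nB / 2) \<le> nA * (\<delta> * nB / 2)"
    unfolding nA_def using \<delta>_pos nB_pos fA by (intro mult_right_mono) (auto intro: card_mono)
  moreover have "(\<Sum>a\<in>A. real (deg a)) = (\<Sum>a\<in>A1. real (deg a)) + (\<Sum>a\<in>A-A1. real (deg a))"
    using sum.subset_diff[OF fA1(2) fA, of "\<lambda>a. real (deg a)"] by linarith
  ultimately have "(\<Sum>a\<in>A1. real (card {b\<in>B. (a,b)\<in>G})) \<ge> \<delta> * nA * card B / 2"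
    unfolding deg_def nB_def by (simp add: algebra_simps)
  then obtain U where UA1: "U \<subseteq> A1" and U_big: "real (card U) \<ge> \<delta> * nA / 3"
    and few_sparse: "real (card {p \<in> U \<times> U. real (card {b\<in>B. (fst p,b)\<in>G \<and> (snd p,b)\<in>G}) < \<delta>^3/128 * nB})
       \<le> \<delta> * card U ^ 2 / 16"
    using exists_neighbourhood_few_sparse_pairs[OF fA1(1) fB ne(2) \<delta>_pos, of nA G]
    by (auto simp: nA_def nB_def intro: card_mono[OF fA fA1(2)])
  have fU: "finite U" using UA1 fA1(1) by (rule finite_subset)
  define nU where "nU = real (card U)"
  have "\<delta> * nA / 3 > 0" using \<delta>_pos nA_pos by simp
  then have nU_pos: "nU > 0" using U_big unfolding nU_def by linarith
  define \<tau> where "\<tau> = \<delta>^3 / 128"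
  define com where "com a1 a2 = {b\<in>B. (a1,b)\<in>G \<and> (a2,b)\<in>G}" for a1 a2
  define sparse_partners where "sparse_partners u = {v\<in>U. real (card (com u v)) < \<tau> * nB}" for u
  define U' where "U' = {u\<in>U. real (card (sparse_partners u)) \<le> \<delta> * nU / 8}"
  have U'_big: "real (card U') \<ge> nU / 2"
  proof -
    have "card {p \<in> U \<times> U. real (card (com (fst p) (snd p))) < \<tau> * nB} = (\<Sum>u\<in>U. card (sparse_partners u))"
      unfolding sparse_partners_def
      using card_product_filter_sum_fst[OF fU fU, of "\<lambda>u v. real (card (com u v)) < \<tau> * nB"] by simp
    then have "(\<Sum>u\<in>U. real (card (sparse_partners u))) \<le> \<delta> * nU^2 / 16"
      using few_sparse by (simp add: com_def \<tau>_def nU_def flip: of_nat_sum)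
    moreover have "real (card (U - U')) * (\<delta> * nU / 8) \<le> (\<Sum>u\<in>U. real (card (sparse_partners u)))"
    proof -
      have "U - U' = {u\<in>U. real (card (sparse_partners u)) > \<delta> * nU / 8}"
        by (auto simp: U'_def)
      then show ?thesis
        using card_gt_mult_le_sum[OF fU, of "\<lambda>u. real (card (sparse_partners u))" "\<delta> * nU / 8"]
          \<delta>_pos nU_pos by simp
    qed
    ultimately have "real (card (U - U')) * (\<delta> * nU / 8) \<le> \<delta> * nU^2 / 16" by linarith
    also have "\<dots> = (nU / 2) * (\<delta> * nU / 8)" by (simp add: power2_eq_square)
    finally have "real (card (U - U')) * (\<delta> * nU / 8) \<le> (nU / 2) * (\<delta> * nU / 8)" .
    then have "real (card (U - U')) \<le> nU / 2"
      using \<delta>_pos nU_pos by (simp add: mult_le_cancel_right)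
    moreover have "card (U - U') = card U - card U'" "card U' \<le> card U"
      using fU by (auto simp: U'_def intro: card_Diff_subset card_mono)
    ultimately show ?thesis by (simp add: nU_def of_nat_diff)
  qed
  define W where "W = {w\<in>B. real (card {u\<in>U. (u,w)\<in>G}) \<ge> \<delta> * nU / 4}"
  have W_big: "real (card W) \<ge> \<delta> * nB / 4"
  proof -
    have "(\<Sum>w\<in>B. card {u\<in>U. (u,w)\<in>G}) = (\<Sum>u\<in>U. deg u)"
      unfolding deg_def using card_product_filter_sum_snd[OF fU fB, of "\<lambda>a b. (a,b)\<in>G"]
        card_product_filter_sum_fst[OF fU fB, of "\<lambda>a b. (a,b)\<in>G"] by simp
    then have "(\<Sum>w\<in>B. real (card {u\<in>U. (u,w)\<in>G})) = (\<Sum>u\<in>U. real (deg u))"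
      by (simp flip: of_nat_sum)
    also have "\<dots> \<ge> (\<Sum>u\<in>U. \<delta> * nB / 2)"
      using UA1 by (intro sum_mono) (auto simp: A1_def)
    finally have "(\<Sum>w\<in>B. real (card {u\<in>U. (u,w)\<in>G})) \<ge> nU * (\<delta> * nB / 2)" by (simp add: nU_def)
    moreover have "real (card W) * nU \<ge> (\<Sum>w\<in>B. real (card {u\<in>U. (u,w)\<in>G})) - nB * (\<delta> * nU / 4)"
      unfolding W_def nB_def using \<delta>_pos nU_pos
      by (intro card_ge_mult_ge_sum fB) (auto simp: nU_def intro: card_mono[OF fU])
    ultimately have "real (card W) * nU \<ge> (\<delta> * nB / 4) * nU" by (simp add: algebra_simps)
    then show ?thesis using nU_pos by (simp add: mult_le_cancel_right)
  qed
  have paths: "real (card {(b,a). b\<in>B \<and> a\<in>A \<and> (u,b)\<in>G \<and> (a,b)\<in>G \<and> (a,w)\<in>G})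
         \<ge> \<delta>^5 * nA * nB / 3072" if u: "u \<in> U'" and w: "w \<in> W" for u w
  proof -
    define good where "good = {a\<in>U. (a,w)\<in>G \<and> a \<notin> sparse_partners u}"
    have f_good: "finite good" using fU by (auto simp: good_def)
    have "card {a\<in>U. (a,w)\<in>G} \<le> card (good \<union> sparse_partners u)"
      using fU by (intro card_mono) (auto simp: good_def sparse_partners_def)
    also have "\<dots> \<le> card good + card (sparse_partners u)" by (rule card_Un_le)
    finally have "real (card good) \<ge> \<delta> * nU / 8"
      using u w by (simp add: W_def U'_def)
    moreover have "\<delta> * (\<delta> * nA / 3) \<le> \<delta> * nU"
      using U_big \<delta>_pos unfolding nU_def by (intro mult_left_mono) auto
    ultimately have good_big: "real (card good) \<ge> \<delta> * (\<delta> * nA / 3) / 8" by linarith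
    define paths_via where "paths_via = {p \<in> B \<times> good. (u, fst p)\<in>G \<and> (snd p, fst p)\<in>G}"
    have "card paths_via = (\<Sum>a\<in>good. card (com u a))"
      unfolding paths_via_def com_def
      using card_product_filter_sum_snd[OF fB f_good, of "\<lambda>b a. (u,b)\<in>G \<and> (a,b)\<in>G"] by simp
    then have "real (card paths_via) = (\<Sum>a\<in>good. real (card (com u a)))" by simp
    also have "\<dots> \<ge> (\<Sum>a\<in>good. \<tau> * nB)"
      by (intro sum_mono) (auto simp: good_def sparse_partners_def)
    finally have "real (card paths_via) \<ge> real (card good) * (\<tau> * nB)" by simp
    moreover have "real (card good) * (\<tau> * nB) \<ge> (\<delta> * (\<delta> * nA / 3) / 8) * (\<tau> * nB)"
      using good_big \<delta>_pos nB_pos by (intro mult_right_mono) (auto simp: \<tau>_def)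
    moreover have "(\<delta> * (\<delta> * nA / 3) / 8) * (\<tau> * nB) = \<delta>^5 * nA * nB / 3072"
      by (simp add: \<tau>_def power_def eval_nat_numeral field_simps)
    moreover have "card paths_via \<le> card {(b,a). b\<in>B \<and> a\<in>A \<and> (u,b)\<in>G \<and> (a,b)\<in>G \<and> (a,w)\<in>G}"
      using fA fB UA1 fA1(2)
      by (intro card_mono[OF finite_subset[of _ "B \<times> A"]]) (auto simp: paths_via_def good_def)
    ultimately show ?thesis by linarith
  qed
  show ?thesis
  proof (intro exI conjI)
    show "U' \<subseteq> A" using UA1 fA1 by (auto simp: U'_def)
    show "W \<subseteq> B" by (auto simp: W_def)
    show "real (card U') \<ge> \<delta> * card A / 6" using U'_big U_big by (simp add: nA_def nU_def)
    show "real (card W) \<ge> \<delta> * card B / 4" using W_big by (simp add: nB_def)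
  qed (use paths in \<open>simp add: nA_def nB_def\<close>)
qed

lemma card_popular_sums_le:
  fixes Y :: "'a::ab_group_add set" and t :: real
  assumes fY: "finite Y" and t_pos: "t > 0"
  shows "real (card {v \<in> (\<lambda>(a,b). a+b) ` (Y\<times>Y). real (card {(a,b). a\<in>Y \<and> b\<in>Y \<and> a+b=v}) \<ge> t}) * t
           \<le> real (card Y)^2"
proof -
  define R where "R v = {(a,b). a\<in>Y \<and> b\<in>Y \<and> a+b=v}" for v
  define P where "P = {v \<in> (\<lambda>(a,b). a+b) ` (Y\<times>Y). real (card (R v)) \<ge> t}"
  have fR: "finite (R v)" for v by (rule finite_subset[of _ "Y\<times>Y"]) (auto simp: R_def fY)
  have fP: "finite P" using fY by (auto simp: P_def)
  have "card (\<Union>v\<in>P. R v) = (\<Sum>v\<in>P. card (R v))"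
    by (rule card_UN_disjoint) (auto simp: fP fR[unfolded R_def] R_def)
  moreover have "card (\<Union>v\<in>P. R v) \<le> card (Y \<times> Y)"
    by (rule card_mono) (auto simp: R_def fY)
  ultimately have "(\<Sum>v\<in>P. card (R v)) \<le> card Y ^ 2"
    by (simp add: card_cartesian_product power2_eq_square)
  then have "real (\<Sum>v\<in>P. card (R v)) \<le> real (card Y)^2"
    unfolding of_nat_power[symmetric] of_nat_le_iff .
  moreover have "real (\<Sum>v\<in>P. card (R v)) \<ge> real (card P) * t"
    unfolding of_nat_sum using sum_bounded_below[of P t "\<lambda>v. real (card (R v))"] by (auto simp: P_def)
  ultimately show ?thesis unfolding P_def R_def by linarith
qed

text \<open>Sums that are not popular carry at most half of the additive quadruples, so the pairs
  with a popular sum form a dense graph.\<close>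

lemma card_popular_sum_pairs_ge:
  fixes Y :: "'a::ab_group_add set" and s :: 'a and \<kappa> :: real
  assumes fY: "finite Y" and \<kappa>_pos: "\<kappa> > 0"
    and energy: "real (card {(a,b,c,d). a\<in>Y \<and> b\<in>Y \<and> c\<in>Y \<and> d\<in>Y \<and> a+b = c+d+s}) \<ge> \<kappa> * card Y ^ 3"
    and P_def: "P = {v \<in> (\<lambda>(a,b). a+b) ` (Y\<times>Y). real (card {(a,b). a\<in>Y \<and> b\<in>Y \<and> a+b=v}) \<ge> \<kappa> * card Y / 2}"
  shows "real (card {(a,b). a\<in>Y \<and> b\<in>Y \<and> a+b \<in> P}) * card Y \<ge> (\<kappa>/2) * card Y ^ 3"
proof -
  define n where "n = real (card Y)"
  define R where "R v = {(a,b). a\<in>Y \<and> b\<in>Y \<and> a+b=v}" for v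
  have fR: "finite (R v)" for v by (rule finite_subset[of _ "Y\<times>Y"]) (auto simp: R_def fY)
  have R_small: "real (card (R v)) \<le> \<kappa> * n / 2" if "v \<notin> P" for v
  proof (cases "v \<in> (\<lambda>(a,b). a+b) ` (Y\<times>Y)")
    case True
    with that have "\<not> real (card (R v)) \<ge> \<kappa> * n / 2" unfolding P_def R_def n_def by blast
    then show ?thesis by linarith
  next
    case False
    have "R v = {}"
    proof (rule ccontr)
      assume "R v \<noteq> {}"
      then obtain a b where "a \<in> Y" "b \<in> Y" "v = a + b" by (auto simp: R_def)
      then have "v \<in> (\<lambda>(a,b). a+b) ` (Y\<times>Y)" by force
      with False show False by simp
    qed
    then show ?thesis using \<kappa>_pos by (simp add: n_def)
  qed
  define G where "G = {(a,b). a\<in>Y \<and> b\<in>Y \<and> a+b \<in> P}"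
  have fG: "finite G" by (rule finite_subset[of _ "Y\<times>Y"]) (auto simp: G_def fY)
  define T1 where "T1 = {(a,b,c,d). a\<in>Y \<and> b\<in>Y \<and> c\<in>Y \<and> d\<in>Y \<and> a+b = c+d+s \<and> a+b \<in> P}"
  define T2 where "T2 = {(a,b,c,d). a\<in>Y \<and> b\<in>Y \<and> c\<in>Y \<and> d\<in>Y \<and> a+b = c+d+s \<and> a+b \<notin> P}"
  \<comment> \<open>A quadruple in T1 is determined by (a,b) \<in> G and c.\<close>
  have "T1 \<subseteq> (\<lambda>((a,b),c). (a,b,c,a+b-c-s)) ` (G \<times> Y)"
  proof
    fix q assume "q \<in> T1"
    then obtain a b c d where q: "q = (a,b,c,d)" "a\<in>Y" "b\<in>Y" "c\<in>Y" "a+b=c+d+s" "a+b\<in>P"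
      by (auto simp: T1_def)
    then have "((a,b),c) \<in> G \<times> Y" "d = a+b-c-s" by (auto simp: G_def algebra_simps)
    then show "q \<in> (\<lambda>((a,b),c). (a,b,c,a+b-c-s)) ` (G \<times> Y)" using q(1) by force
  qed
  then have "card T1 \<le> card ((\<lambda>((a,b),c). (a,b,c,a+b-c-s)) ` (G \<times> Y))"
    by (intro card_mono) (auto simp: fG fY)
  also have "\<dots> \<le> card (G \<times> Y)" by (rule card_image_le) (simp add: fG fY)
  also have "\<dots> = card G * card Y" by (rule card_cartesian_product)
  finally have T1_le: "real (card T1) \<le> real (card G) * n"
    unfolding n_def of_nat_mult[symmetric] of_nat_le_iff .
  \<comment> \<open>A quadruple in T2 is determined by (c,d) and one of the few representations of c+d+s.\<close>
  define F where "F cd = (if fst cd + snd cd + s \<in> P then {} else R (fst cd + snd cd + s))" for cd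
  have fF: "finite (F cd)" for cd by (simp add: F_def fR)
  have "T2 \<subseteq> (\<lambda>(cd,ab). (fst ab, snd ab, fst cd, snd cd)) ` (SIGMA cd:Y\<times>Y. F cd)"
  proof
    fix q assume "q \<in> T2"
    then obtain a b c d where q: "q = (a,b,c,d)" "a\<in>Y" "b\<in>Y" "c\<in>Y" "d\<in>Y" "a+b=c+d+s" "a+b\<notin>P"
      by (auto simp: T2_def)
    then have "((c,d),(a,b)) \<in> (SIGMA cd:Y\<times>Y. F cd)" by (auto simp: F_def R_def)
    then show "q \<in> (\<lambda>(cd,ab). (fst ab, snd ab, fst cd, snd cd)) ` (SIGMA cd:Y\<times>Y. F cd)"
      using q(1) by force
  qed
  then have "card T2 \<le> card ((\<lambda>(cd,ab). (fst ab, snd ab, fst cd, snd cd)) ` (SIGMA cd:Y\<times>Y. F cd))"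
    by (intro card_mono) (auto simp: fY fF)
  also have "\<dots> \<le> card (SIGMA cd:Y\<times>Y. F cd)" by (rule card_image_le) (auto simp: fY fF)
  also have "\<dots> = (\<Sum>cd\<in>Y\<times>Y. card (F cd))" by (simp add: fY fF)
  finally have "real (card T2) \<le> (\<Sum>cd\<in>Y\<times>Y. real (card (F cd)))" by (simp flip: of_nat_sum)
  also have "\<dots> \<le> (\<Sum>cd\<in>Y\<times>Y. \<kappa> * n / 2)"
    using R_small \<kappa>_pos by (intro sum_mono) (simp add: F_def n_def)
  finally have T2_le: "real (card T2) \<le> n * n * (\<kappa> * n / 2)"
    by (simp add: n_def card_cartesian_product)
  have "{(a,b,c,d). a\<in>Y \<and> b\<in>Y \<and> c\<in>Y \<and> d\<in>Y \<and> a+b = c+d+s} = T1 \<union> T2"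
    by (auto simp: T1_def T2_def)
  then have "card {(a,b,c,d). a\<in>Y \<and> b\<in>Y \<and> c\<in>Y \<and> d\<in>Y \<and> a+b = c+d+s} \<le> card T1 + card T2"
    by (simp add: card_Un_le)
  then have "real (card {(a,b,c,d). a\<in>Y \<and> b\<in>Y \<and> c\<in>Y \<and> d\<in>Y \<and> a+b = c+d+s})
      \<le> real (card T1) + real (card T2)"
    unfolding of_nat_add[symmetric] of_nat_le_iff .
  then have "\<kappa> * n^3 \<le> real (card T1) + real (card T2)" using energy by (simp add: n_def)
  moreover have "(\<kappa>/2) * n^3 = \<kappa> * n^3 - n * n * (\<kappa> * n / 2)" by (simp add: power3_eq_cube)
  ultimately have "real (card G) * n \<ge> (\<kappa>/2) * n^3" using T1_le T2_le by linarith
  then show ?thesis by (simp add: G_def n_def)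
qed

lemma card_diff_mult_le_card_sum_sq:
  fixes U W :: "'a::ab_group_add set"
  assumes fU: "finite U" and fW: "finite W"
  shows "card W * card {u1 - u2 | u1 u2. u1\<in>U \<and> u2\<in>U} \<le> card {u + w | u w. u\<in>U \<and> w\<in>W} ^ 2"
proof -
  define D where "D = {u1 - u2 | u1 u2. u1\<in>U \<and> u2\<in>U}"
  define S where "S = {u + w | u w. u\<in>U \<and> w\<in>W}"
  have fS: "finite S"
  proof -
    have "S = (\<lambda>(u,w). u + w) ` (U \<times> W)" by (auto simp: S_def)
    then show ?thesis using fU fW by simp
  qed
  have "\<forall>d\<in>D. \<exists>p. fst p \<in> U \<and> snd p \<in> U \<and> d = fst p - snd p"
    by (force simp: D_def)
  from bchoice[OF this] obtain g
    where g: "\<forall>d\<in>D. fst (g d) \<in> U \<and> snd (g d) \<in> U \<and> d = fst (g d) - snd (g d)"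
    by blast
  define f1 where "f1 d = fst (g d)" for d
  define f2 where "f2 d = snd (g d)" for d
  have f12: "\<And>d. d \<in> D \<Longrightarrow> f1 d \<in> U \<and> f2 d \<in> U \<and> d = f1 d - f2 d"
    using g by (simp add: f1_def f2_def)
  have "inj_on (\<lambda>(w,d). (f1 d + w, f2 d + w)) (W \<times> D)"
  proof (rule inj_onI, clarsimp)
    fix w d w' d' assume a: "w \<in> W" "d \<in> D" "w' \<in> W" "d' \<in> D"
      "f1 d + w = f1 d' + w'" "f2 d + w = f2 d' + w'"
    have "(f1 d + w) - (f2 d + w) = (f1 d' + w') - (f2 d' + w')" using a(5,6) by simp
    then have "f1 d - f2 d = f1 d' - f2 d'" by simp
    then have "d = d'" using f12[OF a(2)] f12[OF a(4)] by simp
    then show "w = w' \<and> d = d'" using a(5) by simp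
  qed
  moreover have "(\<lambda>(w,d). (f1 d + w, f2 d + w)) ` (W \<times> D) \<subseteq> S \<times> S"
  proof clarsimp
    fix w d assume "w \<in> W" "d \<in> D"
    then show "f1 d + w \<in> S \<and> f2 d + w \<in> S" using f12[OF \<open>d \<in> D\<close>] unfolding S_def by blast
  qed
  ultimately have "card (W \<times> D) \<le> card (S \<times> S)"
    by (rule card_inj_on_le) (simp add: fS)
  then show ?thesis by (simp add: card_cartesian_product power2_eq_square D_def S_def)
qed

lemma card_mult_le_card_cube:
  fixes P S :: "'a::ab_group_add set" and m :: real
  assumes fP: "finite P" and fS: "finite S"
    and reps: "\<And>v. v \<in> S \<Longrightarrow> real (card {t \<in> P \<times> P \<times> P. fst t - fst (snd t) + snd (snd t) = v}) \<ge> m"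
  shows "real (card S) * m \<le> real (card P) ^ 3"
proof -
  define Trip where "Trip v = {t \<in> P \<times> P \<times> P. fst t - fst (snd t) + snd (snd t) = v}" for v
  have fTrip: "finite (Trip v)" for v using fP by (auto simp: Trip_def)
  have "card (\<Union>v\<in>S. Trip v) = (\<Sum>v\<in>S. card (Trip v))"
    by (rule card_UN_disjoint) (auto simp: fS fTrip[unfolded Trip_def] Trip_def)
  moreover have "card (\<Union>v\<in>S. Trip v) \<le> card (P \<times> P \<times> P)"
    by (rule card_mono) (auto simp: fP Trip_def)
  ultimately have "(\<Sum>v\<in>S. card (Trip v)) \<le> card P ^ 3"
    by (simp add: card_cartesian_product power3_eq_cube)
  then have "real (\<Sum>v\<in>S. card (Trip v)) \<le> real (card P) ^ 3"
    unfolding of_nat_power[symmetric] of_nat_le_iff .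
  moreover have "real (\<Sum>v\<in>S. card (Trip v)) \<ge> real (card S) * m"
    unfolding of_nat_sum using sum_bounded_below[of S m "\<lambda>v. real (card (Trip v))"] reps
    by (auto simp: Trip_def)
  ultimately show ?thesis by linarith
qed

definition bsg_constant :: "real \<Rightarrow> real" where
  "bsg_constant \<kappa> = (8 / (\<kappa>^3 * ((\<kappa>/2)^5/3072)))^2 * (8/\<kappa>)"

lemma bsg_constant_nonneg: "\<kappa> > 0 \<Longrightarrow> bsg_constant \<kappa> \<ge> 0"
  by (simp add: bsg_constant_def)

theorem balog_szemeredi_gowers:
  fixes Y :: "'a::ab_group_add set" and s :: 'a and \<kappa> :: real
  assumes fY: "finite Y" and Y_ne: "Y \<noteq> {}" and \<kappa>_pos: "\<kappa> > 0"
    and energy: "real (card {(a,b,c,d). a\<in>Y \<and> b\<in>Y \<and> c\<in>Y \<and> d\<in>Y \<and> a+b = c+d+s}) \<ge> \<kappa> * card Y ^ 3"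
  shows "\<exists>U \<subseteq> Y. real (card U) \<ge> \<kappa> * card Y / 12 \<and>
           real (card {u1 - u2 | u1 u2. u1\<in>U \<and> u2\<in>U}) \<le> bsg_constant \<kappa> * card Y"
proof -
  define n where "n = real (card Y)"
  have n_pos: "n > 0" using fY Y_ne by (simp add: n_def card_gt_0_iff)
  define P where "P = {v \<in> (\<lambda>(a,b). a+b) ` (Y\<times>Y). real (card {(a,b). a\<in>Y \<and> b\<in>Y \<and> a+b=v}) \<ge> \<kappa> * card Y / 2}"
  have fP: "finite P" using fY by (auto simp: P_def)
  have "real (card P) * (\<kappa> * n / 2) \<le> n^2"
    using card_popular_sums_le[OF fY, of "\<kappa> * n / 2"] \<kappa>_pos n_pos by (simp add: P_def n_def)
  then have P_small: "real (card P) \<le> 2 * n / \<kappa>"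
    using \<kappa>_pos n_pos by (simp add: field_simps power2_eq_square)
  define G where "G = {(a,b). a\<in>Y \<and> b\<in>Y \<and> a+b \<in> P}"
  have "real (card G) * n \<ge> (\<kappa>/2) * n * n * n"
    using card_popular_sum_pairs_ge[OF fY \<kappa>_pos energy P_def]
    by (simp add: G_def n_def power3_eq_cube mult.assoc)
  then have G_big: "real (card G) \<ge> (\<kappa>/2) * card Y * card Y"
    using n_pos by (simp add: n_def)
  define \<theta> where "\<theta> = (\<kappa>/2)^5/3072"
  have \<theta>_pos: "\<theta> > 0" using \<kappa>_pos by (simp add: \<theta>_def)
  have GY: "G \<subseteq> Y \<times> Y" by (auto simp: G_def)
  obtain U W where UY: "U \<subseteq> Y" and WY: "W \<subseteq> Y" and U_big: "real (card U) \<ge> (\<kappa>/2) * card Y / 6"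
    and W_big: "real (card W) \<ge> (\<kappa>/2) * card Y / 4"
    and paths: "\<forall>u\<in>U. \<forall>w\<in>W. real (card {(b,a). b\<in>Y \<and> a\<in>Y \<and> (u,b)\<in>G \<and> (a,b)\<in>G \<and> (a,w)\<in>G})
         \<ge> (\<kappa>/2)^5 * card Y * card Y / 3072"
    using bipartite_many_paths3[OF fY fY GY _ G_big Y_ne Y_ne] \<kappa>_pos by auto
  have fU: "finite U" and fW: "finite W" using UY WY fY by (auto intro: finite_subset)
  define S where "S = {u + w | u w. u\<in>U \<and> w\<in>W}"
  have fS: "finite S"
  proof -
    have "S = (\<lambda>(u,w). u + w) ` (U \<times> W)" by (auto simp: S_def)
    then show ?thesis using fU fW by simp
  qed
  \<comment> \<open>A path u - b - a - w writes u + w = (u + b) - (a + b) + (a + w) with all three sums popular.\<close>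
  have reps: "real (card {t \<in> P \<times> P \<times> P. fst t - fst (snd t) + snd (snd t) = v}) \<ge> \<theta> * n * n"
    if "v \<in> S" for v
  proof -
    obtain u w where uw: "u \<in> U" "w \<in> W" "v = u + w" using \<open>v \<in> S\<close> by (auto simp: S_def)
    define Pa where "Pa = {(b,a). b\<in>Y \<and> a\<in>Y \<and> (u,b)\<in>G \<and> (a,b)\<in>G \<and> (a,w)\<in>G}"
    have "inj_on (\<lambda>(b,a). (u+b, a+b, a+w)) Pa" by (auto simp: inj_on_def Pa_def)
    moreover have "(\<lambda>(b,a). (u+b, a+b, a+w)) ` Pa \<subseteq> {t \<in> P \<times> P \<times> P. fst t - fst (snd t) + snd (snd t) = v}"
      using uw by (auto simp: Pa_def G_def)
    moreover have "finite {t \<in> P \<times> P \<times> P. fst t - fst (snd t) + snd (snd t) = v}" using fP by simp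
    ultimately have "card Pa \<le> card {t \<in> P \<times> P \<times> P. fst t - fst (snd t) + snd (snd t) = v}"
      by (intro card_inj_on_le)
    moreover have "real (card Pa) \<ge> \<theta> * n * n" using paths uw by (simp add: Pa_def \<theta>_def n_def)
    ultimately show ?thesis by linarith
  qed
  have "real (card S) * (\<theta> * n * n) \<le> real (card P) ^ 3"
    by (rule card_mult_le_card_cube[OF fP fS reps])
  also have "\<dots> \<le> (2 * n / \<kappa>)^3" using P_small by (intro power_mono) auto
  also have "\<dots> = (8 * n / (\<kappa>^3 * \<theta>)) * (\<theta> * n * n)"
    using \<kappa>_pos \<theta>_pos n_pos by (simp add: field_simps power3_eq_cube)
  finally have S_small: "real (card S) \<le> 8 * n / (\<kappa>^3 * \<theta>)"
    by (rule mult_right_le_imp_le) (use \<theta>_pos n_pos in simp)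
  define D where "D = {u1 - u2 | u1 u2. u1\<in>U \<and> u2\<in>U}"
  have "(\<kappa> * n / 8) * real (card D) \<le> real (card W) * real (card D)"
    using W_big by (intro mult_right_mono) (auto simp: n_def)
  also have "\<dots> \<le> real (card S) ^ 2"
    using card_diff_mult_le_card_sum_sq[OF fU fW]
    unfolding D_def S_def of_nat_mult[symmetric] of_nat_power[symmetric] of_nat_le_iff .
  also have "\<dots> \<le> (8 * n / (\<kappa>^3 * \<theta>))^2" using S_small by (intro power_mono) auto
  also have "\<dots> = (\<kappa> * n / 8) * (bsg_constant \<kappa> * n)"
    using \<kappa>_pos n_pos \<theta>_pos by (simp add: bsg_constant_def \<theta>_def field_simps power2_eq_square)
  finally have "real (card D) \<le> bsg_constant \<kappa> * n" using \<kappa>_pos n_pos by (simp add: mult_le_cancel_left)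
  then show ?thesis using UY U_big unfolding D_def n_def by (intro exI[of _ U]) auto
qed

definition log_scale :: "real \<Rightarrow> real \<Rightarrow> real" where
  "log_scale e t = 1 / (t * ln t powr (1 + e))"

lemma log_scale_pos: "t > 1 \<Longrightarrow> log_scale e t > 0"
  by (simp add: log_scale_def)

lemma log_scale_le:
  assumes "ln t \<ge> 1" "t \<ge> 1" "e \<ge> 0"
  shows "log_scale e t \<le> 1 / (t * ln t)"
proof -
  have "ln t powr 1 \<le> ln t powr (1 + e)" using assms by (intro powr_mono) auto
  then have "t * ln t \<le> t * ln t powr (1 + e)" using assms by (intro mult_left_mono) auto
  moreover have "ln t > 0" using assms by linarith
  then have "t * ln t > 0" using assms by simp
  ultimately show ?thesis unfolding log_scale_def by (intro divide_left_mono) auto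
qed

lemma log_scale_antimono:
  assumes "1 < u" "u \<le> v" "e \<ge> -1"
  shows "log_scale e v \<le> log_scale e u"
proof -
  have "ln u > 0" "ln u \<le> ln v" using assms by auto
  then have "ln u powr (1 + e) \<le> ln v powr (1 + e)" "ln u powr (1 + e) > 0"
    using assms by (auto intro: powr_mono2)
  then have "u * ln u powr (1 + e) \<le> v * ln v powr (1 + e)" using assms by (intro mult_mono) auto
  then show ?thesis
    unfolding log_scale_def using assms \<open>ln u powr (1 + e) > 0\<close> by (intro divide_left_mono) auto
qed

lemma dist_int_less_imp:
  assumes "dist_int z < \<eta>" shows "\<exists>k::int. \<bar>z - of_int k\<bar> < \<eta>"
proof -
  have "bdd_below ((\<lambda>k::int. \<bar>z - of_int k\<bar>) ` UNIV)" by (rule bdd_belowI[of _ 0]) auto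
  then show ?thesis using assms unfolding dist_int_def by (simp add: cINF_less_iff)
qed

lemma dist_int_pos:
  assumes "z \<notin> \<int>" shows "dist_int z > 0"
proof -
  define \<delta> where "\<delta> = min (z - of_int \<lfloor>z\<rfloor>) (of_int \<lfloor>z\<rfloor> + 1 - z)"
  have "z \<noteq> of_int \<lfloor>z\<rfloor>" using assms by (metis Ints_of_int)
  then have "z > of_int \<lfloor>z\<rfloor>" using of_int_floor_le[of z] by linarith
  then have \<delta>_pos: "\<delta> > 0" by (simp add: \<delta>_def)
  have "\<delta> \<le> \<bar>z - of_int k\<bar>" for k :: int
  proof (cases "k \<le> \<lfloor>z\<rfloor>")
    case True
    then have "(of_int k::real) \<le> of_int \<lfloor>z\<rfloor>" by simp
    then show ?thesis using \<open>z > of_int \<lfloor>z\<rfloor>\<close> by (simp add: \<delta>_def)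
  next
    case False
    then have "(of_int k::real) \<ge> of_int \<lfloor>z\<rfloor> + 1" by simp
    then show ?thesis using \<open>z > of_int \<lfloor>z\<rfloor>\<close> by (simp add: \<delta>_def)
  qed
  then have "\<delta> \<le> dist_int z" unfolding dist_int_def by (intro cINF_greatest) auto
  then show ?thesis using \<delta>_pos by linarith
qed

text \<open>A finite union of balls around the rationals k/d that covers every \<alpha> with
  1/m \<le> |\<alpha>| \<le> m and \<alpha> d within \<eta> of an integer.\<close>

definition resonant_set :: "real \<Rightarrow> real \<Rightarrow> real \<Rightarrow> real set" where
  "resonant_set m \<eta> d = (if \<bar>d\<bar> < 1/(2*m) then {} else
     (\<Union>k\<in>{-(\<lceil>m*\<bar>d\<bar>\<rceil>+1)..\<lceil>m*\<bar>d\<bar>\<rceil>+1} - {0}. ball (of_int k / d) (\<eta>/\<bar>d\<bar>)))"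

lemma resonant_set_in_borel: "resonant_set m \<eta> d \<in> sets borel"
  unfolding resonant_set_def by (auto intro!: borel_open open_UN)

lemma bounded_resonant_set: "bounded (resonant_set m \<eta> d)"
  unfolding resonant_set_def by auto

lemma measure_resonant_set_le:
  assumes m_pos: "m > 0" and \<eta>_pos: "\<eta> > 0"
  shows "measure lborel (resonant_set m \<eta> d) \<le> 20 * m * \<eta>"
proof (cases "\<bar>d\<bar> < 1/(2*m)")
  case True then show ?thesis using m_pos \<eta>_pos by (simp add: resonant_set_def)
next
  case False
  define K where "K = \<lceil>m*\<bar>d\<bar>\<rceil>+1"
  have d_ge: "1/(2*m) \<le> \<bar>d\<bar>" using False by simp
  moreover have "1/(2*m) > 0" using m_pos by simp
  ultimately have d_pos: "\<bar>d\<bar> > 0" by linarith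
  have inv_d: "1/\<bar>d\<bar> \<le> 2*m" using d_ge d_pos m_pos by (simp add: field_simps)
  have "m * \<bar>d\<bar> \<ge> 0" using m_pos by simp
  then have K_ge: "K \<ge> 1" and K_le: "real_of_int K \<le> m*\<bar>d\<bar> + 2" unfolding K_def by linarith+
  have "card ({-K..K} - {0}) = 2 * nat K" using K_ge by (simp add: card_Diff_singleton)
  have "resonant_set m \<eta> d = (\<Union>k\<in>{-K..K} - {0}. ball (of_int k / d) (\<eta>/\<bar>d\<bar>))"
    using False by (simp add: resonant_set_def K_def)
  then have "measure lborel (resonant_set m \<eta> d)
      \<le> (\<Sum>k\<in>{-K..K} - {0}. measure lborel (ball (of_int k / d) (\<eta>/\<bar>d\<bar>)))"
    by (simp only:) (rule measure_UNION_le, auto)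
  also have "\<dots> = real (2 * nat K) * (2 * (\<eta>/\<bar>d\<bar>))"
    using \<eta>_pos d_pos \<open>card ({-K..K} - {0}) = 2 * nat K\<close>
    by (simp add: ball_eq_greaterThanLessThan measure_def)
  also have "\<dots> \<le> (2 * (m*\<bar>d\<bar> + 2)) * (2 * (\<eta>/\<bar>d\<bar>))"
    using K_ge K_le \<eta>_pos by (intro mult_right_mono) auto
  also have "\<dots> = 4 * m * \<eta> + 8 * \<eta> * (1/\<bar>d\<bar>)" using d_pos by (simp add: field_simps)
  also have "\<dots> \<le> 4 * m * \<eta> + 8 * \<eta> * (2*m)" using inv_d \<eta>_pos by (simp only: add_left_mono mult_left_mono)
  also have "\<dots> = 20 * m * \<eta>" by simp
  finally show ?thesis .
qed

lemma mem_resonant_set: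
  assumes m_pos: "m > 0" and \<eta>_pos: "\<eta> > 0" and \<eta>_le: "\<eta> \<le> 1/4" and d_big: "\<bar>d\<bar> \<ge> m * \<eta>"
    and \<alpha>_lower: "1/m \<le> \<bar>\<alpha>\<bar>" and \<alpha>_upper: "\<bar>\<alpha>\<bar> \<le> m" and close: "\<bar>\<alpha> * d - of_int k\<bar> < \<eta>"
  shows "\<alpha> \<in> resonant_set m \<eta> d"
proof -
  have "\<bar>d\<bar> * (1/m) \<le> \<bar>d\<bar> * \<bar>\<alpha>\<bar>" using \<alpha>_lower by (intro mult_left_mono) auto
  then have "\<bar>\<alpha> * d\<bar> \<ge> \<bar>d\<bar> / m" by (simp add: abs_mult mult.commute)
  moreover have "\<bar>d\<bar> / m \<ge> \<eta>" using d_big m_pos by (simp add: field_simps)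
  ultimately have k_ne: "k \<noteq> 0" using close by auto
  have \<alpha>d_le: "\<bar>\<alpha> * d\<bar> \<le> m * \<bar>d\<bar>" using \<alpha>_upper by (simp add: abs_mult mult_right_mono)
  have d_not_small: "\<not> \<bar>d\<bar> < 1/(2*m)"
  proof
    assume "\<bar>d\<bar> < 1/(2*m)"
    then have "m * \<bar>d\<bar> < 1/2" using m_pos by (simp add: field_simps)
    then have "\<bar>of_int k\<bar> < (1::real)" using \<alpha>d_le close \<eta>_le by linarith
    then show False using k_ne by linarith
  qed
  moreover have "1/(2*m) > 0" using m_pos by simp
  ultimately have d_pos: "\<bar>d\<bar> > 0" by linarith
  have "\<bar>of_int k\<bar> < m * \<bar>d\<bar> + 1" using \<alpha>d_le close \<eta>_le by linarith
  then have k_range: "k \<in> {-(\<lceil>m*\<bar>d\<bar>\<rceil>+1)..\<lceil>m*\<bar>d\<bar>\<rceil>+1} - {0}" using k_ne by auto linarith+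
  have "\<alpha> - of_int k / d = (\<alpha> * d - of_int k) / d" using d_pos by (simp add: field_simps)
  then have "dist (of_int k / d) \<alpha> < \<eta> / \<bar>d\<bar>"
    using close d_pos by (simp add: dist_real_def abs_minus_commute abs_divide divide_strict_right_mono)
  then show ?thesis using d_not_small k_range unfolding resonant_set_def by auto
qed

fun scales :: "real \<Rightarrow> nat \<Rightarrow> nat" where
  "scales L 0 = nat \<lceil>L\<rceil> + 3"
| "scales L (Suc N) = nat \<lceil>exp (2^(Suc N) * L * (1 + real (scales L N)))\<rceil>"

context
  fixes L :: real assumes L_ge_1: "L \<ge> 1"
begin

lemma ln_scales_Suc_ge: "ln (real (scales L (Suc N))) \<ge> 2^(Suc N) * L * (1 + real (scales L N))"
  by (simp add: ln_ge_iff)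

lemma scales_Suc_ge: "real (scales L (Suc N)) \<ge> L * (1 + real (scales L N))"
proof -
  have "L * (1 + real (scales L N)) \<le> 2^(Suc N) * L * (1 + real (scales L N))"
  proof (rule mult_right_mono)
    have "(1::real) \<le> 2^(Suc N)" by (rule one_le_power) simp
    then show "L \<le> 2^(Suc N) * L" using L_ge_1 by (simp add: mult_le_cancel_right1)
  qed simp
  also have "\<dots> \<le> exp (2^(Suc N) * L * (1 + real (scales L N)))"
    by (rule order_trans[OF _ exp_ge_add_one_self]) simp
  also have "\<dots> \<le> real (scales L (Suc N))" by simp
  finally show ?thesis .
qed

lemma scales_ge: "real (scales L N) \<ge> L"
proof (cases N)
  case (Suc M)
  have "L * 1 \<le> L * (1 + real (scales L M))" using L_ge_1 by (intro mult_left_mono) auto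
  then show ?thesis using scales_Suc_ge[of M] Suc by simp
qed (simp, linarith)

lemma strict_mono_scales: "strict_mono (scales L)"
proof (rule strict_monoI_Suc)
  fix N
  have "1 + real (scales L N) \<le> L * (1 + real (scales L N))" using L_ge_1 by simp
  then show "scales L N < scales L (Suc N)" using scales_Suc_ge[of N] by linarith
qed

lemma scales_ge_3: "scales L N \<ge> 3"
  using strict_mono_less_eq[OF strict_mono_scales, of 0 N] by simp

end

lemma card_enumerate_le:
  fixes S :: "nat set"
  assumes inf: "infinite S"
  shows "card {k. k \<ge> 1 \<and> enumerate S (k - 1) \<le> a} = card (S \<inter> {..a})"
proof (rule bij_betw_same_card[of "\<lambda>k. enumerate S (k - 1)"], rule bij_betw_imageI)
  show "inj_on (\<lambda>k. enumerate S (k - 1)) {k. k \<ge> 1 \<and> enumerate S (k - 1) \<le> a}"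
  proof (rule inj_onI)
    fix k l assume "k \<in> {k. k \<ge> 1 \<and> enumerate S (k - 1) \<le> a}" "l \<in> {k. k \<ge> 1 \<and> enumerate S (k - 1) \<le> a}"
      and "enumerate S (k - 1) = enumerate S (l - 1)"
    then show "k = l" using inj_enumerate[OF inf] by (auto dest: injD)
  qed
  show "(\<lambda>k. enumerate S (k - 1)) ` {k. k \<ge> 1 \<and> enumerate S (k - 1) \<le> a} = S \<inter> {..a}"
  proof
    show "(\<lambda>k. enumerate S (k - 1)) ` {k. k \<ge> 1 \<and> enumerate S (k - 1) \<le> a} \<subseteq> S \<inter> {..a}"
      using enumerate_in_set[OF inf] by auto
    show "S \<inter> {..a} \<subseteq> (\<lambda>k. enumerate S (k - 1)) ` {k. k \<ge> 1 \<and> enumerate S (k - 1) \<le> a}"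
    proof
      fix i assume i: "i \<in> S \<inter> {..a}"
      then obtain n where n: "enumerate S n = i"
        using bij_enumerate[OF inf] by (metis IntD1 bij_betw_iff_bijections)
      then show "i \<in> (\<lambda>k. enumerate S (k - 1)) ` {k. k \<ge> 1 \<and> enumerate S (k - 1) \<le> a}"
        using i by (intro image_eqI[of _ _ "Suc n"]) auto
    qed
  qed
qed

section \<open>Sequences with logarithmic gaps\<close>

lemma floor_divide_quadruple:
  fixes \<gamma> :: real
  assumes \<gamma>_pos: "\<gamma> > 0" and close: "\<bar>x1 + x2 - x3 - x4\<bar> < \<gamma>"
  shows "\<lfloor>x1/\<gamma>\<rfloor> + \<lfloor>x2/\<gamma>\<rfloor> - \<lfloor>x3/\<gamma>\<rfloor> - \<lfloor>x4/\<gamma>\<rfloor> \<in> {-2..2}"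
proof -
  have "\<bar>x1/\<gamma> + x2/\<gamma> - x3/\<gamma> - x4/\<gamma>\<bar> < 1"
    using close \<gamma>_pos by (simp add: diff_divide_distrib[symmetric] add_divide_distrib[symmetric]
        abs_divide pos_divide_less_eq)
  then have "real_of_int (\<lfloor>x1/\<gamma>\<rfloor> + \<lfloor>x2/\<gamma>\<rfloor> - \<lfloor>x3/\<gamma>\<rfloor> - \<lfloor>x4/\<gamma>\<rfloor>) < 3"
    "real_of_int (\<lfloor>x1/\<gamma>\<rfloor> + \<lfloor>x2/\<gamma>\<rfloor> - \<lfloor>x3/\<gamma>\<rfloor> - \<lfloor>x4/\<gamma>\<rfloor>) > -3"
    by (simp_all add: abs_less_iff) linarith+
  then show ?thesis by simp
qed

locale log_gap_sequence =
  fixes x :: "nat \<Rightarrow> real" and c :: real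
  assumes c_pos: "c > 0"
    and gaps: "\<And>n. n \<ge> 1 \<Longrightarrow> x (Suc n) - x n \<ge> c * ln (real n) / real n"
begin

lemma x_mono:
  assumes "1 \<le> i" "i \<le> j"
  shows "x i \<le> x j"
  using assms(2)
proof (induction j rule: dec_induct)
  case (step j)
  then have "c * ln (real j) / real j \<ge> 0" using c_pos assms(1) by simp
  then show ?case using gaps[of j] step assms(1) by linarith
qed simp

lemma gap_ge:
  assumes "2 \<le> i" "i < j" "j \<le> a"
  shows "x j - x i \<ge> c / (2 * real a)"
proof -
  have "c * (1/2) \<le> c * ln 2" using c_pos ln2_ge_two_thirds by (intro mult_left_mono) auto
  then have "c / (2 * real a) \<le> c * ln 2 / real a"
    using divide_right_mono[of "c * (1/2)" "c * ln 2" "real a"] by simp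
  also have "\<dots> \<le> c * ln (real i) / real a"
    using c_pos assms by (intro divide_right_mono mult_left_mono) auto
  also have "\<dots> \<le> c * ln (real i) / real i"
    using c_pos assms by (intro divide_left_mono) auto
  also have "\<dots> \<le> x (Suc i) - x i" using gaps assms by simp
  also have "\<dots> \<le> x j - x i" using x_mono[of "Suc i" j] assms by simp
  finally show ?thesis .
qed

lemma dist_ge:
  assumes "2 \<le> i" "2 \<le> j" "i \<noteq> j" "i \<le> a" "j \<le> a"
  shows "\<bar>x i - x j\<bar> \<ge> c / (2 * real a)"
  using gap_ge[of i j a] gap_ge[of j i a] assms by (cases "i < j") auto

lemma card_close_le_2:
  assumes \<gamma>_small: "4 * \<gamma> * real a < c"
  shows "card {n\<in>{1..a}. \<bar>x n - C\<bar> < \<gamma>} \<le> 2"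
proof -
  define S where "S = {n\<in>{2..a}. \<bar>x n - C\<bar> < \<gamma>}"
  have fS: "finite S" by (simp add: S_def)
  have "card S \<le> Suc 0"
    unfolding card_le_Suc0_iff_eq[OF fS]
  proof (intro ballI)
    fix i j assume ij: "i \<in> S" "j \<in> S"
    show "i = j"
    proof (rule ccontr)
      assume "i \<noteq> j"
      then have "\<bar>x i - x j\<bar> \<ge> c / (2 * real a)" using ij by (intro dist_ge) (auto simp: S_def)
      moreover have "2 * \<gamma> < c / (2 * real a)" using \<gamma>_small ij by (auto simp: S_def field_simps)
      ultimately show False using ij by (auto simp: S_def)
    qed
  qed
  moreover have "{n\<in>{1..a}. \<bar>x n - C\<bar> < \<gamma>} \<subseteq> insert 1 S" by (auto simp: S_def)
  then have "card {n\<in>{1..a}. \<bar>x n - C\<bar> < \<gamma>} \<le> card (insert 1 S)"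
    by (intro card_mono) (auto simp: S_def)
  moreover have "card (insert 1 S) \<le> Suc (card S)" by (simp add: card_insert_if S_def)
  ultimately show ?thesis by linarith
qed

lemma card_triples_close_le:
  assumes \<gamma>_small: "4 * \<gamma> * real a < c"
  shows "card {(u,v,w). u\<in>{1..a} \<and> v\<in>{1..a} \<and> w\<in>{1..a} \<and> \<bar>x w - C u v\<bar> < \<gamma>} \<le> 2 * a * a"
  using card_triples_le[of "{1..a}" "\<lambda>u v w. \<bar>x w - C u v\<bar> < \<gamma>" 2] card_close_le_2[OF \<gamma>_small]
  by simp

text \<open>The gap condition says nothing at n = 1 (ln 1 = 0), so quadruples involving the index 1
  are split off: once three indices are fixed, the separation of the other points leaves at most
  two choices for the fourth.\<close>

lemma add_energy_le_energy_from_2: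
  assumes \<gamma>_small: "4 * \<gamma> * real a < c"
  shows "real (add_energy x a \<gamma>) \<le> real (card {(n1,n2,n3,n4). n1\<in>{2..a} \<and> n2\<in>{2..a} \<and> n3\<in>{2..a} \<and> n4\<in>{2..a}
            \<and> \<bar>x n1 + x n2 - x n3 - x n4\<bar> < \<gamma>}) + 8 * real a ^ 2"
proof -
  define A where "A = {1..a}"
  define Z where "Z C = {(u,v,w). u\<in>A \<and> v\<in>A \<and> w\<in>A \<and> \<bar>x w - C u v\<bar> < \<gamma>}" for C
  have Z_le: "card (Z C) \<le> 2 * a * a" for C
    using card_triples_close_le[OF \<gamma>_small] by (simp add: Z_def A_def)
  have fZ: "finite (Z C)" for C by (rule finite_subset[of _ "A\<times>A\<times>A"]) (auto simp: Z_def A_def)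
  define Q where "Q = {(n1, n2, n3, n4). n1 \<in> A \<and> n2 \<in> A \<and> n3 \<in> A \<and> n4 \<in> A
       \<and> \<bar>x n1 + x n2 - x n3 - x n4\<bar> < \<gamma>}"
  define QI where "QI = {(n1,n2,n3,n4). n1\<in>{2..a} \<and> n2\<in>{2..a} \<and> n3\<in>{2..a} \<and> n4\<in>{2..a}
            \<and> \<bar>x n1 + x n2 - x n3 - x n4\<bar> < \<gamma>}"
  have fQI: "finite QI" by (rule finite_subset[of _ "{2..a}\<times>{2..a}\<times>{2..a}\<times>{2..a}"]) (auto simp: QI_def)
  define Z1 where "Z1 = (\<lambda>(u,v,w). (1::nat,u,v,w)) ` Z (\<lambda>u v. x 1 + x u - x v)"
  define Z2 where "Z2 = (\<lambda>(u,v,w). (u,1::nat,v,w)) ` Z (\<lambda>u v. x u + x 1 - x v)"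
  define Z3 where "Z3 = (\<lambda>(u,v,w). (w,u,1::nat,v)) ` Z (\<lambda>u v. x 1 + x v - x u)"
  define Z4 where "Z4 = (\<lambda>(u,v,w). (w,u,v,1::nat)) ` Z (\<lambda>u v. x v + x 1 - x u)"
  have "Q \<subseteq> QI \<union> Z1 \<union> Z2 \<union> Z3 \<union> Z4"
  proof
    fix q assume "q \<in> Q"
    then obtain n1 n2 n3 n4 where q: "q = (n1,n2,n3,n4)" "n1 \<in> A" "n2 \<in> A" "n3 \<in> A" "n4 \<in> A"
      "\<bar>x n1 + x n2 - x n3 - x n4\<bar> < \<gamma>" by (auto simp: Q_def)
    consider "n1 = 1" | "n2 = 1" | "n3 = 1" | "n4 = 1" | "n1 \<noteq> 1 \<and> n2 \<noteq> 1 \<and> n3 \<noteq> 1 \<and> n4 \<noteq> 1"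
      by blast
    then show "q \<in> QI \<union> Z1 \<union> Z2 \<union> Z3 \<union> Z4"
    proof cases
      case 1
      then have "(n2,n3,n4) \<in> Z (\<lambda>u v. x 1 + x u - x v)" using q by (auto simp: Z_def abs_less_iff)
      then have "q \<in> Z1" unfolding Z1_def using q(1) 1 by (intro image_eqI[of _ _ "(n2,n3,n4)"]) auto
      then show ?thesis by blast
    next
      case 2
      then have "(n1,n3,n4) \<in> Z (\<lambda>u v. x u + x 1 - x v)" using q by (auto simp: Z_def abs_less_iff)
      then have "q \<in> Z2" unfolding Z2_def using q(1) 2 by (intro image_eqI[of _ _ "(n1,n3,n4)"]) auto
      then show ?thesis by blast
    next
      case 3
      then have "(n2,n4,n1) \<in> Z (\<lambda>u v. x 1 + x v - x u)" using q by (auto simp: Z_def abs_less_iff)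
      then have "q \<in> Z3" unfolding Z3_def using q(1) 3 by (intro image_eqI[of _ _ "(n2,n4,n1)"]) auto
      then show ?thesis by blast
    next
      case 4
      then have "(n2,n3,n1) \<in> Z (\<lambda>u v. x v + x 1 - x u)" using q by (auto simp: Z_def abs_less_iff)
      then have "q \<in> Z4" unfolding Z4_def using q(1) 4 by (intro image_eqI[of _ _ "(n2,n3,n1)"]) auto
      then show ?thesis by blast
    next
      case 5
      then show ?thesis using q by (auto simp: QI_def A_def)
    qed
  qed
  then have "card Q \<le> card (QI \<union> Z1 \<union> Z2 \<union> Z3 \<union> Z4)"
    by (intro card_mono) (simp_all add: fQI fZ Z1_def Z2_def Z3_def Z4_def)
  also have "\<dots> \<le> card QI + card Z1 + card Z2 + card Z3 + card Z4"
    using card_Un_le[of "QI \<union> Z1 \<union> Z2 \<union> Z3" Z4] card_Un_le[of "QI \<union> Z1 \<union> Z2" Z3]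
      card_Un_le[of "QI \<union> Z1" Z2] card_Un_le[of QI Z1] by linarith
  also have "\<dots> \<le> card QI + 4 * (2 * a * a)"
  proof -
    have "card (f ` Z C) \<le> 2 * a * a" for f :: "nat \<times> nat \<times> nat \<Rightarrow> nat \<times> nat \<times> nat \<times> nat" and C
      using order_trans[OF card_image_le[OF fZ] Z_le] .
    then have "card Z1 \<le> 2 * a * a" "card Z2 \<le> 2 * a * a" "card Z3 \<le> 2 * a * a" "card Z4 \<le> 2 * a * a"
      unfolding Z1_def Z2_def Z3_def Z4_def by blast+
    then show ?thesis by linarith
  qed
  finally have "real (card Q) \<le> real (card QI + 4 * (2 * a * a))"
    by (simp only: of_nat_le_iff)
  then have "real (card Q) \<le> real (card QI) + 8 * real a ^ 2" by (simp add: power2_eq_square)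
  moreover have "add_energy x a \<gamma> = card Q" by (simp add: add_energy_def Q_def A_def)
  ultimately show ?thesis by (simp add: QI_def)
qed

text \<open>At a scale \<gamma> below the minimal gap the points x 2, ..., x a fall into distinct cells of
  the lattice \<gamma>\<int>, so large additive energy of x transfers to the cell indices, to which
  the Balog-Szemeredi-Gowers theorem applies.\<close>

lemma additive_structure_at_scale:
  assumes r_pos: "r > 0" and a2: "a \<ge> 2" and \<gamma>_pos: "\<gamma> > 0" and \<gamma>_small: "4 * \<gamma> * real a < c"
    and a_big: "16 / r \<le> real a" and energy: "real (add_energy x a \<gamma>) \<ge> r * real a ^ 3"
  shows "\<exists>B \<subseteq> {2..a}. real (card B) \<ge> (r/10) * (real a - 1) / 12 \<and>
     (\<exists>V::int set. finite V \<and> real (card V) \<le> bsg_constant (r/10) * real a \<and>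
        (\<forall>i\<in>B. \<forall>j\<in>B. \<exists>v\<in>V. \<bar>x i - x j - \<gamma> * of_int v\<bar> < \<gamma>))"
proof -
  define I where "I = {2..a}"
  define y where "y n = \<lfloor>x n / \<gamma>\<rfloor>" for n
  have y_le: "\<gamma> * of_int (y n) \<le> x n" for n
    using \<gamma>_pos floor_divide_lower[of \<gamma> "x n"] by (simp add: y_def mult.commute)
  have y_gt: "\<gamma> * of_int (y n) > x n - \<gamma>" for n
    using \<gamma>_pos floor_divide_upper[of \<gamma> "x n"] by (simp add: y_def distrib_left mult.commute)
  have y_less: "y i < y j" if "i \<in> I" "j \<in> I" "i < j" for i j
  proof -
    have "0 < \<gamma> * real a" using \<gamma>_pos a2 by simp
    then have "\<gamma> * (2 * real a) < c" using \<gamma>_small by (simp add: algebra_simps)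
    then have "\<gamma> < c / (2 * real a)" using a2 by (simp add: field_simps)
    also have "\<dots> \<le> x j - x i" using that by (intro gap_ge) (auto simp: I_def)
    finally have "\<gamma> * of_int (y i) < \<gamma> * of_int (y j)" using y_le[of i] y_gt[of j] by linarith
    then show ?thesis using \<gamma>_pos by simp
  qed
  have y_inj: "inj_on y I"
    by (rule inj_onI) (metis linorder_neqE_nat less_irrefl y_less)
  define Y where "Y = y ` I"
  have fY: "finite Y" and Y_ne: "Y \<noteq> {}" using a2 by (auto simp: Y_def I_def)
  have card_Y: "card Y = a - 1" using y_inj by (simp add: Y_def card_image I_def)
  define QI where "QI = {(n1,n2,n3,n4). n1\<in>{2..a} \<and> n2\<in>{2..a} \<and> n3\<in>{2..a} \<and> n4\<in>{2..a}
            \<and> \<bar>x n1 + x n2 - x n3 - x n4\<bar> < \<gamma>}"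
  have QI_big: "real (card QI) \<ge> (card {-2..2::int}) * (r * real a ^ 3 / 10)"
  proof -
    have "16 * real a ^ 2 \<le> (r * real a) * real a ^ 2"
      using a_big r_pos by (intro mult_right_mono) (auto simp: field_simps)
    then show ?thesis
      using add_energy_le_energy_from_2[OF \<gamma>_small] energy unfolding QI_def
      by (simp add: power2_eq_square power3_eq_cube algebra_simps)
  qed
  define T where "T s = {(a,b,c,d). a\<in>Y \<and> b\<in>Y \<and> c\<in>Y \<and> d\<in>Y \<and> a+b = c+d+s}" for s :: int
  have fT: "finite (T s)" for s by (rule finite_subset[of _ "Y\<times>Y\<times>Y\<times>Y"]) (auto simp: T_def fY)
  define h where "h = (\<lambda>(n1,n2,n3,n4). (y n1, y n2, y n3, y n4))"
  have "inj_on h QI" using y_inj unfolding QI_def h_def I_def inj_on_def by auto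
  moreover have "h ` QI \<subseteq> (\<Union>s\<in>{-2..2}. T s)"
  proof
    fix z assume "z \<in> h ` QI"
    then obtain n1 n2 n3 n4 where q: "(n1,n2,n3,n4) \<in> QI" and z: "z = h (n1,n2,n3,n4)" by auto
    have "y n1 + y n2 - y n3 - y n4 \<in> {-2..2}"
      using q floor_divide_quadruple[OF \<gamma>_pos, of "x n1" "x n2" "x n3" "x n4"] by (simp add: QI_def y_def)
    moreover have "z \<in> T (y n1 + y n2 - y n3 - y n4)"
      using q z by (auto simp: QI_def h_def T_def Y_def I_def)
    ultimately show "z \<in> (\<Union>s\<in>{-2..2}. T s)" by blast
  qed
  ultimately have "card QI \<le> card (\<Union>s\<in>{-2..2}. T s)"
    by (intro card_inj_on_le) (auto simp: fT)
  also have "\<dots> \<le> (\<Sum>s\<in>{-2..2}. card (T s))" by (rule card_UN_le) simp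
  finally have "(\<Sum>s\<in>{-2..2::int}. real (card (T s))) \<ge> card {-2..2::int} * (r * real a ^ 3 / 10)"
    using QI_big by (simp flip: of_nat_sum)
  then have "\<exists>s\<in>{-2..2::int}. real (card (T s)) \<ge> r * real a ^ 3 / 10"
    by (intro exists_ge_average) auto
  then obtain s where T_big: "real (card (T s)) \<ge> r * real a ^ 3 / 10" by blast
  have "(r/10) * real (card Y) ^ 3 \<le> (r/10) * real a ^ 3"
    using card_Y r_pos by (intro mult_left_mono power_mono) auto
  then have T_big': "real (card (T s)) \<ge> (r/10) * card Y ^ 3" using T_big by simp
  have r10: "r/10 > 0" using r_pos by simp
  obtain U where UY: "U \<subseteq> Y" and U_big: "real (card U) \<ge> (r/10) * card Y / 12"
    and U_diff: "real (card {u1 - u2 | u1 u2. u1\<in>U \<and> u2\<in>U}) \<le> bsg_constant (r/10) * card Y"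
    using balog_szemeredi_gowers[OF fY Y_ne r10 T_big'[unfolded T_def]] by blast
  define B where "B = {i\<in>I. y i \<in> U}"
  define V where "V = {u1 - u2 | u1 u2. u1\<in>U \<and> u2\<in>U}"
  have "card B = card U"
  proof -
    have "bij_betw y B U" using UY y_inj by (auto simp: bij_betw_def B_def Y_def inj_on_subset)
    then show ?thesis by (rule bij_betw_same_card)
  qed
  moreover have "finite V"
  proof -
    have "V = (\<lambda>p. fst p - snd p) ` (U \<times> U)" unfolding V_def image_def by auto
    then show ?thesis using UY fY by (auto intro: finite_subset)
  qed
  moreover have "real (card V) \<le> bsg_constant (r/10) * real a"
  proof -
    have "bsg_constant (r/10) * real (card Y) \<le> bsg_constant (r/10) * real a"
      using card_Y bsg_constant_nonneg[OF r10] by (intro mult_left_mono) auto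
    then show ?thesis using U_diff unfolding V_def by linarith
  qed
  moreover have "\<exists>v\<in>V. \<bar>x i - x j - \<gamma> * of_int v\<bar> < \<gamma>" if "i \<in> B" "j \<in> B" for i j
  proof
    show "y i - y j \<in> V" using that unfolding V_def B_def by blast
    show "\<bar>x i - x j - \<gamma> * of_int (y i - y j)\<bar> < \<gamma>"
      using y_le[of i] y_le[of j] y_gt[of i] y_gt[of j] by (simp add: algebra_simps abs_less_iff)
  qed
  ultimately show ?thesis
    using U_big card_Y a2 by (intro exI[of _ B]) (auto simp: B_def I_def of_nat_diff)
qed

lemma AE_dist_int_pos:
  "AE \<alpha> in lborel. \<forall>i j. 2 \<le> i \<longrightarrow> 2 \<le> j \<longrightarrow> i \<noteq> j \<longrightarrow> dist_int (\<alpha> * x i - \<alpha> * x j) > 0"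
proof -
  define Z where "Z = (\<lambda>(i,j,k). of_int k / (x i - x j)) ` (UNIV :: (nat \<times> nat \<times> int) set)"
  have "countable Z" unfolding Z_def by simp
  then have "AE \<alpha> in lborel. \<alpha> \<notin> Z" by (intro AE_not_in countable_imp_null_set_lborel)
  then show ?thesis
  proof (rule AE_mp, intro AE_I2 impI allI)
    fix \<alpha> :: real and i j :: nat assume \<alpha>_Z: "\<alpha> \<notin> Z" and ij: "2 \<le> i" "2 \<le> j" "i \<noteq> j"
    have "\<bar>x i - x j\<bar> \<ge> c / (2 * real (max i j))" using ij by (intro dist_ge) auto
    moreover have "c / (2 * real (max i j)) > 0" using c_pos ij by simp
    ultimately have "x i - x j \<noteq> 0" by linarith
    have "\<alpha> * x i - \<alpha> * x j \<notin> \<int>"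
    proof
      assume "\<alpha> * x i - \<alpha> * x j \<in> \<int>"
      then obtain k where "\<alpha> * x i - \<alpha> * x j = of_int k" by (auto elim: Ints_cases)
      then have "\<alpha> = of_int k / (x i - x j)" using \<open>x i - x j \<noteq> 0\<close> by (simp add: field_simps)
      then have "\<alpha> \<in> Z" unfolding Z_def by (intro image_eqI[of _ _ "(i,j,k)"]) auto
      then show False using \<alpha>_Z by simp
    qed
    then show "dist_int (\<alpha> * x i - \<alpha> * x j) > 0" by (rule dist_int_pos)
  qed
qed

lemma structured_block:
  fixes A A' :: nat and c0 r \<epsilon>0 :: real
  assumes r_pos: "r > 0" and \<epsilon>0_pos: "\<epsilon>0 > 0" and c0_pos: "c0 > 0" and c0_le: "c0 \<le> 1" "c0 \<le> r/120"
    and A_ge_3: "A \<ge> 3" and ln_A: "ln (real A) \<ge> 1 + 4/c" and A_big: "16 / r \<le> real A"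
    and A_gg: "real A \<ge> (4/(3*c0)) * (1 + real A')"
    and energy: "real (add_energy x A (log_scale \<epsilon>0 (real A))) \<ge> r * real A ^ 3"
  shows "\<exists>B V. B \<subseteq> {A'<..A} \<and> real (card B) \<ge> (c0/4) * real A \<and>
     finite V \<and> real (card V) \<le> bsg_constant (r/10) * real A \<and>
     (\<forall>i\<in>B. \<forall>j\<in>B. \<exists>v\<in>V. \<bar>x i - x j - log_scale \<epsilon>0 (real A) * of_int v\<bar> < log_scale \<epsilon>0 (real A))"
proof -
  define \<gamma> where "\<gamma> = log_scale \<epsilon>0 (real A)"
  have "4/c > 0" using c_pos by simp
  then have ln_A_pos: "ln (real A) > 4/c" "ln (real A) \<ge> 1" using ln_A by linarith+
  have \<gamma>_pos: "\<gamma> > 0" using A_ge_3 by (simp add: \<gamma>_def log_scale_pos)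
  have "4 * \<gamma> * real A \<le> 4 * (1 / (real A * ln (real A))) * real A"
    using log_scale_le[of "real A" \<epsilon>0] ln_A_pos A_ge_3 \<epsilon>0_pos unfolding \<gamma>_def
    by (intro mult_right_mono mult_left_mono) auto
  also have "\<dots> = 4 / ln (real A)" using A_ge_3 by simp
  also have "\<dots> < c" using ln_A_pos c_pos by (simp add: field_simps)
  finally have \<gamma>_small: "4 * \<gamma> * real A < c" .
  obtain B0 V where B0: "B0 \<subseteq> {2..A}" "real (card B0) \<ge> (r/10) * (real A - 1) / 12"
    and V: "finite V" "real (card V) \<le> bsg_constant (r/10) * real A"
      "\<forall>i\<in>B0. \<forall>j\<in>B0. \<exists>v\<in>V. \<bar>x i - x j - \<gamma> * of_int v\<bar> < \<gamma>"
    using additive_structure_at_scale[OF r_pos _ \<gamma>_pos \<gamma>_small A_big] energy A_ge_3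
    unfolding \<gamma>_def by auto
  define B where "B = B0 \<inter> {A'<..}"
  have "card B0 \<le> card (B \<union> {1..A'})"
    using B0(1) by (intro card_mono) (auto simp: B_def intro: finite_subset)
  also have "\<dots> \<le> card B + A'" using card_Un_le[of B "{1..A'}"] by simp
  finally have B0_le: "real (card B0) \<le> real (card B) + real A'" by linarith
  have "c0 * (real A - 1) \<le> (r/120) * (real A - 1)" using A_ge_3 c0_le by (intro mult_right_mono) auto
  then have B0_ge: "real (card B0) \<ge> c0 * real A - c0" using B0(2) by (simp add: algebra_simps)
  have "(4/(3*c0)) * (c0 + real A') \<le> (4/(3*c0)) * (1 + real A')"
    using c0_le c0_pos by (intro mult_left_mono) auto
  then have "(3*c0/4) * ((4/(3*c0)) * (c0 + real A')) \<le> (3*c0/4) * real A"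
    using A_gg c0_pos by (intro mult_left_mono) auto
  moreover have "(3*c0/4) * ((4/(3*c0)) * (c0 + real A')) = c0 + real A'" using c0_pos by simp
  ultimately have "c0 + real A' \<le> (3*c0/4) * real A" by simp
  then have "real (card B) \<ge> (c0/4) * real A" using B0_le B0_ge by (simp add: algebra_simps)
  moreover have "B \<subseteq> {A'<..A}" using B0(1) by (auto simp: B_def)
  ultimately show ?thesis using V unfolding \<gamma>_def by (intro exI[of _ B] exI[of _ V]) (auto simp: B_def)
qed

end

section \<open>Structured blocks at super-exponential scales\<close>

locale gap_blocks = log_gap_sequence +
  fixes a :: "nat \<Rightarrow> nat" and B :: "nat \<Rightarrow> nat set" and V :: "nat \<Rightarrow> int set" and K \<epsilon>0 c1 :: real
  assumes strict_mono_a: "strict_mono a"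
    and a_ge_3: "a N \<ge> 3"
    and ln_a_ge: "N \<ge> 1 \<Longrightarrow> ln (real (a N)) \<ge> 2^N * (K + 2 * real (a (N-1)))"
    and K_nonneg: "K \<ge> 0"
    and \<epsilon>0_pos: "\<epsilon>0 > 0"
    and c1_pos: "c1 > 0"
    and block_subset: "N \<ge> 1 \<Longrightarrow> B N \<subseteq> {a (N-1)<..a N}"
    and card_block: "N \<ge> 1 \<Longrightarrow> real (card (B N)) \<ge> c1 * real (a N)"
    and finite_V: "N \<ge> 1 \<Longrightarrow> finite (V N)"
    and card_V: "N \<ge> 1 \<Longrightarrow> real (card (V N)) \<le> K * real (a N)"
    and block_diffs: "N \<ge> 1 \<Longrightarrow> i \<in> B N \<Longrightarrow> j \<in> B N \<Longrightarrow>
       \<exists>v\<in>V N. \<bar>x i - x j - log_scale \<epsilon>0 (real (a N)) * of_int v\<bar> < log_scale \<epsilon>0 (real (a N))"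

context log_gap_sequence
begin

lemma exists_gap_blocks:
  assumes \<epsilon>0_pos: "\<epsilon>0 > 0" and r_pos: "r > 0"
    and energy: "\<And>N. N \<ge> 2 \<Longrightarrow> real (add_energy x N (log_scale \<epsilon>0 (real N))) \<ge> r * real N ^ 3"
  shows "\<exists>a B V K c1. gap_blocks x c a B V K \<epsilon>0 c1"
proof -
  define K where "K = bsg_constant (r/10)"
  have K_nonneg: "K \<ge> 0" unfolding K_def using r_pos by (rule bsg_constant_nonneg[OF divide_pos_pos]) simp
  define c0 where "c0 = min 1 (r/120)"
  have c0_pos: "c0 > 0" and c0_le: "c0 \<le> 1" "c0 \<le> r/120" using r_pos by (auto simp: c0_def)
  define L where "L = max 1 (max (exp (1 + 4/c)) (max (16/r) (max K (max 2 (4/(3*c0))))))"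
  have L_ge: "L \<ge> 1" "L \<ge> exp (1 + 4/c)" "L \<ge> 16/r" "L \<ge> K" "L \<ge> 2" "L \<ge> 4/(3*c0)"
    by (auto simp: L_def)
  define a where "a = scales L"
  have a_ge_3: "a N \<ge> 3" and a_ge_L: "real (a N) \<ge> L" for N
    unfolding a_def using scales_ge_3 scales_ge L_ge(1) by auto
  have ln_a: "ln (real (a N)) \<ge> 1 + 4/c" for N
    using a_ge_L[of N] L_ge(2) a_ge_3[of N] by (subst ln_ge_iff) auto
  define is_block where "is_block N BV \<longleftrightarrow> fst BV \<subseteq> {a (N-1)<..a N} \<and> real (card (fst BV)) \<ge> (c0/4) * real (a N) \<and>
       finite (snd BV) \<and> real (card (snd BV)) \<le> K * real (a N) \<and>
       (\<forall>i\<in>fst BV. \<forall>j\<in>fst BV. \<exists>v\<in>snd BV.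
          \<bar>x i - x j - log_scale \<epsilon>0 (real (a N)) * of_int v\<bar> < log_scale \<epsilon>0 (real (a N)))"
    for N and BV :: "nat set \<times> int set"
  have "\<exists>BV. N \<ge> 1 \<longrightarrow> is_block N BV" for N
  proof (cases "N \<ge> 1")
    case True
    then obtain M where N: "N = Suc M" by (cases N) auto
    have "real (a N) \<ge> L * (1 + real (a M))"
      using scales_Suc_ge[OF L_ge(1), of M] by (simp add: a_def N)
    moreover have "L * (1 + real (a M)) \<ge> (4/(3*c0)) * (1 + real (a M))"
      using L_ge(6) by (intro mult_right_mono) auto
    ultimately have "real (a N) \<ge> (4/(3*c0)) * (1 + real (a (N-1)))" by (simp add: N)
    then show ?thesis
      using structured_block[OF r_pos \<epsilon>0_pos c0_pos c0_le a_ge_3 ln_a, of N "a (N-1)"]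
        energy[of "a N"] a_ge_3[of N] a_ge_L[of N] L_ge(3)
      by (auto simp: K_def is_block_def)
  qed simp
  then obtain BV where BV: "\<And>N. N \<ge> 1 \<Longrightarrow> is_block N (BV N)" by metis
  have ln_a_ge: "ln (real (a N)) \<ge> 2^N * (K + 2 * real (a (N-1)))" if "N \<ge> 1" for N
  proof -
    from \<open>N \<ge> 1\<close> obtain M where N: "N = Suc M" by (cases N) auto
    have "K + 2 * real (a M) \<le> L * (1 + real (a M))"
      using L_ge(4,5) mult_right_mono[OF L_ge(5), of "real (a M)"] by (simp add: algebra_simps)
    then have "2^N * (K + 2 * real (a M)) \<le> 2^N * L * (1 + real (a M))"
      by (simp add: mult.assoc)
    also have "\<dots> \<le> ln (real (a N))" using ln_scales_Suc_ge[OF L_ge(1), of M] by (simp add: a_def N)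
    finally show ?thesis by (simp add: N)
  qed
  have "gap_blocks x c a (\<lambda>N. fst (BV N)) (\<lambda>N. snd (BV N)) K \<epsilon>0 (c0/4)"
    using BV unfolding is_block_def by unfold_locales
      (use strict_mono_scales[OF L_ge(1)] a_ge_3 ln_a_ge K_nonneg \<epsilon>0_pos c0_pos in \<open>auto simp: a_def\<close>)
  then show ?thesis by blast
qed

end

context gap_blocks
begin

lemma ln_a_ge_1: "ln (real (a N)) \<ge> 1"
proof -
  have "exp 1 \<le> real (a N)" using exp_le a_ge_3[of N] by linarith
  then show ?thesis using a_ge_3[of N] by (subst ln_ge_iff) auto
qed

lemma ln_a_ge_power:
  assumes "N \<ge> 1" shows "ln (real (a N)) \<ge> 2^N"
proof -
  have "1 \<le> K + 2 * real (a (N-1))" using K_nonneg a_ge_3[of "N-1"] by simp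
  then have "(2::real)^N * 1 \<le> 2^N * (K + 2 * real (a (N-1)))" by (intro mult_left_mono) auto
  then show ?thesis using ln_a_ge[OF assms] by linarith
qed

lemma log_scale_a_le: "e \<ge> 0 \<Longrightarrow> log_scale e (real (a N)) \<le> 1 / (real (a N) * ln (real (a N)))"
  using log_scale_le ln_a_ge_1 a_ge_3[of N] by simp

lemma log_scale_a_pos: "log_scale e (real (a N)) > 0"
  using log_scale_pos a_ge_3[of N] by simp

definition blocks :: "nat set" where
  "blocks = (\<Union>N\<in>{1..}. B N)"

lemma mem_blocks_imp_mem_block:
  assumes "i \<in> blocks" "N \<ge> 1" "a (N-1) < i" "i \<le> a N"
  shows "i \<in> B N"
proof -
  obtain M where M: "M \<ge> 1" "i \<in> B M" using assms(1) by (auto simp: blocks_def)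
  have "a (M-1) < i" "i \<le> a M" using block_subset[OF M(1)] M(2) by auto
  have "M \<le> N"
  proof (rule ccontr)
    assume "\<not> M \<le> N"
    then have "a N \<le> a (M-1)" using strict_mono_a by (simp add: strict_mono_less_eq)
    then show False using \<open>a (M-1) < i\<close> assms(4) by simp
  qed
  moreover have "N \<le> M"
  proof (rule ccontr)
    assume "\<not> N \<le> M"
    then have "a M \<le> a (N-1)" using strict_mono_a by (simp add: strict_mono_less_eq)
    then show False using \<open>i \<le> a M\<close> assms(3) by simp
  qed
  ultimately show ?thesis using M(2) by simp
qed

lemma blocks_ge_2:
  assumes "i \<in> blocks" shows "i \<ge> 2"
proof -
  obtain N where "N \<ge> 1" "i \<in> B N" using assms by (auto simp: blocks_def)
  then have "a (N-1) < i" using block_subset[OF \<open>N \<ge> 1\<close>] by auto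
  then show ?thesis using a_ge_3[of "N-1"] by linarith
qed

lemma infinite_blocks: "infinite blocks"
proof (unfold infinite_nat_iff_unbounded_le, intro allI)
  fix m
  have "B (Suc m) \<noteq> {}"
  proof
    assume "B (Suc m) = {}"
    then have "c1 * real (a (Suc m)) \<le> 0" using card_block[of "Suc m"] by simp
    moreover have "c1 * real (a (Suc m)) > 0" using c1_pos a_ge_3[of "Suc m"] by (intro mult_pos_pos) auto
    ultimately show False by linarith
  qed
  then obtain i where "i \<in> B (Suc m)" by blast
  moreover have "m \<le> a m" using strict_mono_a by (rule strict_mono_imp_increasing)
  moreover have "a m < i" using \<open>i \<in> B (Suc m)\<close> block_subset[of "Suc m"] by auto
  moreover have "i \<in> blocks" using \<open>i \<in> B (Suc m)\<close> by (auto simp: blocks_def)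
  ultimately show "\<exists>i\<ge>m. i \<in> blocks" by (intro exI[of _ i]) auto
qed

definition block_enum :: "nat \<Rightarrow> nat" where
  "block_enum k = enumerate blocks (k - 1)"

lemma block_enum_in_blocks: "block_enum k \<in> blocks"
  using enumerate_in_set[OF infinite_blocks] by (simp add: block_enum_def)

lemma strict_mono_on_block_enum: "strict_mono_on {1..} block_enum"
  unfolding strict_mono_on_def block_enum_def by (auto intro!: enumerate_mono[OF _ infinite_blocks])

lemma block_enum_eq_iff: "k \<ge> 1 \<Longrightarrow> l \<ge> 1 \<Longrightarrow> block_enum k = block_enum l \<longleftrightarrow> k = l"
  using inj_enumerate[OF infinite_blocks] by (auto simp: block_enum_def dest: injD)

lemma card_block_enum_le:
  "N \<ge> 1 \<Longrightarrow> real (card {k. k \<ge> 1 \<and> block_enum k \<le> a N}) \<ge> c1 * real (a N)"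
proof -
  assume "N \<ge> 1"
  have "card (B N) \<le> card (blocks \<inter> {..a N})"
    using block_subset[OF \<open>N \<ge> 1\<close>] \<open>N \<ge> 1\<close> by (intro card_mono) (auto simp: blocks_def)
  then show ?thesis
    using card_block[OF \<open>N \<ge> 1\<close>] card_enumerate_le[OF infinite_blocks, of "a N"]
    unfolding block_enum_def by linarith
qed

section \<open>Metric separation\<close>

text \<open>The differences whose resonance with \<alpha> could make a pair at level N fail: lattice
  points \<gamma>(a N) v approximating differences inside B N, and the differences with one index
  below a (N-1).\<close>

definition candidate_diffs :: "nat \<Rightarrow> real set" where
  "candidate_diffs N = (\<lambda>v. log_scale \<epsilon>0 (real (a N)) * of_int v) ` V N \<union>
     (\<lambda>(i,j). x i - x j) ` ({1..a N} \<times> {1..a (N-1)} \<union> {1..a (N-1)} \<times> {1..a N})"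

definition exceptional :: "real \<Rightarrow> real \<Rightarrow> nat \<Rightarrow> real set" where
  "exceptional m \<epsilon> N = (if N = 0 then {} else
     \<Union>d\<in>candidate_diffs N. resonant_set m (log_scale \<epsilon> (real (a N)) + m * log_scale \<epsilon>0 (real (a N))) d)"

lemma finite_candidate_diffs: "N \<ge> 1 \<Longrightarrow> finite (candidate_diffs N)"
  using finite_V by (simp add: candidate_diffs_def)

lemma card_candidate_diffs_le:
  assumes "N \<ge> 1"
  shows "real (card (candidate_diffs N)) \<le> K * real (a N) + 2 * real (a N) * real (a (N-1))"
proof -
  have "card (candidate_diffs N) \<le> card ((\<lambda>v. log_scale \<epsilon>0 (real (a N)) * of_int v) ` V N) +
      card ((\<lambda>(i,j). x i - x j) ` ({1..a N} \<times> {1..a (N-1)} \<union> {1..a (N-1)} \<times> {1..a N}))"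
    unfolding candidate_diffs_def by (rule card_Un_le)
  also have "\<dots> \<le> card (V N) + card ({1..a N} \<times> {1..a (N-1)} \<union> {1..a (N-1)} \<times> {1..a N})"
    by (intro add_mono card_image_le) (use finite_V[OF assms] in auto)
  also have "\<dots> \<le> card (V N) + (card ({1..a N} \<times> {1..a (N-1)}) + card ({1..a (N-1)} \<times> {1..a N}))"
    by (intro add_left_mono card_Un_le)
  also have "\<dots> = card (V N) + 2 * (a N * a (N-1))" by (simp add: card_cartesian_product)
  finally have "real (card (candidate_diffs N)) \<le> real (card (V N)) + 2 * (real (a N) * real (a (N-1)))"
    by (simp only: of_nat_le_iff flip: of_nat_mult of_nat_add)
  then show ?thesis using card_V[OF assms] by (simp add: mult.assoc)
qed

lemma exceptional_width_le:
  assumes "m \<ge> 0" "\<epsilon> \<ge> 0"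
  shows "log_scale \<epsilon> (real (a N)) + m * log_scale \<epsilon>0 (real (a N)) \<le> (1 + m) / (real (a N) * ln (real (a N)))"
proof -
  have "m * log_scale \<epsilon>0 (real (a N)) \<le> m * (1 / (real (a N) * ln (real (a N))))"
    using log_scale_a_le \<epsilon>0_pos assms by (intro mult_left_mono) auto
  then show ?thesis using log_scale_a_le[OF assms(2), of N] by (simp add: add_divide_distrib)
qed

lemma exceptional_in_sets: "exceptional m \<epsilon> N \<in> sets lborel"
  unfolding exceptional_def using finite_candidate_diffs
  by (auto intro!: sets.finite_UN resonant_set_in_borel)

lemma emeasure_exceptional_finite: "emeasure lborel (exceptional m \<epsilon> N) < \<infinity>"
  unfolding exceptional_def using finite_candidate_diffs
  by (intro emeasure_bounded_finite) (auto intro!: bounded_UN bounded_resonant_set)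

text \<open>The super-exponential growth of a makes the number of candidate differences negligible
  against ln (a N), so the measures are summable.\<close>

lemma measure_exceptional_le:
  assumes m: "m \<ge> 1" and \<epsilon>: "\<epsilon> > 0"
  shows "measure lborel (exceptional m \<epsilon> N) \<le> 20 * m * (1 + m) * (1/2)^N"
proof (cases "N = 0")
  case True then show ?thesis using m by (simp add: exceptional_def)
next
  case False
  then have N: "N \<ge> 1" by simp
  define A where "A = real (a N)"
  define \<eta> where "\<eta> = log_scale \<epsilon> A + m * log_scale \<epsilon>0 A"
  have A_ge: "A \<ge> 3" and ln_A: "ln A \<ge> 1" using a_ge_3 ln_a_ge_1 by (simp_all add: A_def)
  have \<eta>_pos: "\<eta> > 0" unfolding \<eta>_def A_def
    using log_scale_a_pos[of \<epsilon> N] log_scale_a_pos[of \<epsilon>0 N] m by (intro add_pos_nonneg) auto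
  have \<eta>_le: "\<eta> \<le> (1 + m) / (A * ln A)" using exceptional_width_le m \<epsilon> by (simp add: \<eta>_def A_def)
  have "exceptional m \<epsilon> N = (\<Union>d\<in>candidate_diffs N. resonant_set m \<eta> d)"
    using False by (simp add: exceptional_def \<eta>_def A_def)
  then have "measure lborel (exceptional m \<epsilon> N) \<le> (\<Sum>d\<in>candidate_diffs N. measure lborel (resonant_set m \<eta> d))"
    using finite_candidate_diffs[OF N] by (simp only:) (rule measure_UNION_le, auto intro: resonant_set_in_borel)
  also have "\<dots> \<le> real (card (candidate_diffs N)) * (20 * m * \<eta>)"
    using sum_bounded_above[of "candidate_diffs N" "\<lambda>d. measure lborel (resonant_set m \<eta> d)"]
      measure_resonant_set_le[of m \<eta>] m \<eta>_pos by simp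
  also have "\<dots> \<le> (K * A + 2 * A * real (a (N-1))) * (20 * m * ((1 + m) / (A * ln A)))"
    using card_candidate_diffs_le[OF N] \<eta>_le \<eta>_pos m by (intro mult_mono) (auto simp: A_def)
  also have "\<dots> = 20 * m * (1 + m) * ((K + 2 * real (a (N-1))) / ln A)"
    using A_ge ln_A by (simp add: field_simps)
  also have "\<dots> \<le> 20 * m * (1 + m) * (1/2)^N"
  proof (rule mult_left_mono)
    have "ln A \<ge> 2^N * (K + 2 * real (a (N-1)))" using ln_a_ge[OF N] by (simp add: A_def)
    then show "(K + 2 * real (a (N-1))) / ln A \<le> (1/2)^N"
      using ln_A by (simp add: divide_le_eq field_simps power_one_over)
  qed (use m in simp)
  finally show ?thesis .
qed

lemma AE_eventually_not_exceptional:
  assumes "m \<ge> 1" "\<epsilon> > 0"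
  shows "AE \<alpha> in lborel. eventually (\<lambda>N. \<alpha> \<notin> exceptional m \<epsilon> N) sequentially"
proof -
  have "summable (\<lambda>N. measure lborel (exceptional m \<epsilon> N))"
    using measure_exceptional_le[OF assms]
    by (intro summable_comparison_test'[where N=0, OF summable_mult[OF summable_geometric]]) auto
  from borel_cantelli_AE1[OF exceptional_in_sets emeasure_exceptional_finite this]
  show ?thesis by simp
qed

lemma exceptional_width_small:
  assumes m: "m \<ge> 1" and \<epsilon>: "\<epsilon> > 0"
    and ln_big: "4 * (1 + m) \<le> ln (real (a N))" "2 * (1 + m + m * m) / c \<le> ln (real (a N))"
  shows "log_scale \<epsilon> (real (a N)) + m * log_scale \<epsilon>0 (real (a N)) \<le> 1/4"
    and "m * (log_scale \<epsilon> (real (a N)) + m * log_scale \<epsilon>0 (real (a N))) + log_scale \<epsilon>0 (real (a N))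
           \<le> c / (2 * real (a N))"
proof -
  define A where "A = real (a N)"
  define \<eta>' where "\<eta>' = log_scale \<epsilon> A + m * log_scale \<epsilon>0 A"
  have A_ge: "A \<ge> 3" using a_ge_3[of N] by (simp add: A_def)
  have ln_pos: "ln A > 0" using ln_a_ge_1[of N] by (simp add: A_def)
  have \<eta>'_le: "\<eta>' \<le> (1 + m) / (A * ln A)"
    using exceptional_width_le[of m \<epsilon>] m \<epsilon> by (simp add: \<eta>'_def A_def)
  have \<gamma>_le: "log_scale \<epsilon>0 A \<le> 1 / (A * ln A)" using log_scale_a_le \<epsilon>0_pos by (simp add: A_def)
  have "ln A \<le> A * ln A" using A_ge ln_pos by simp
  then have "(1 + m) / (A * ln A) \<le> (1 + m) / ln A"
    using A_ge ln_pos m by (intro divide_left_mono) auto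
  then have "\<eta>' \<le> (1 + m) / ln A" using \<eta>'_le by linarith
  also have "\<dots> \<le> 1/4" using ln_big(1) ln_pos by (simp add: A_def field_simps)
  finally show "\<eta>' \<le> 1/4" unfolding \<eta>'_def A_def .
  have "m * \<eta>' + log_scale \<epsilon>0 A \<le> m * ((1 + m) / (A * ln A)) + 1 / (A * ln A)"
    using \<eta>'_le \<gamma>_le m by (intro add_mono mult_left_mono) auto
  also have "\<dots> = (1 + m + m * m) / (A * ln A)" using A_ge ln_pos by (simp add: field_simps)
  also have "\<dots> \<le> (c * ln A / 2) / (A * ln A)"
    using ln_big(2) c_pos A_ge ln_pos by (intro divide_right_mono) (auto simp: field_simps A_def)
  also have "\<dots> = c / (2 * A)" using ln_pos by simp
  finally show "m * \<eta>' + log_scale \<epsilon>0 A \<le> c / (2 * A)" unfolding \<eta>'_def A_def .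
qed

text \<open>Outside the exceptional set, a pair with an index beyond a (N-1) is separated at level N:
  otherwise \<alpha> would resonate with one of the candidate differences, either x i - x j itself or
  the lattice point approximating it inside B N.\<close>

lemma block_pair_separated:
  assumes m: "m \<ge> 1" and \<epsilon>: "\<epsilon> > 0" and \<alpha>: "1/m \<le> \<bar>\<alpha>\<bar>" "\<bar>\<alpha>\<bar> \<le> m" and N: "N \<ge> 1"
    and ln_big: "4 * (1 + m) \<le> ln (real (a N))" "2 * (1 + m + m * m) / c \<le> ln (real (a N))"
    and not_exc: "\<alpha> \<notin> exceptional m \<epsilon> N"
    and ij: "i \<in> blocks" "j \<in> blocks" "i \<noteq> j" "i \<le> a N" "j \<le> a N"
    and new: "a (N-1) < i \<or> a (N-1) < j"
  shows "dist_int (\<alpha> * x i - \<alpha> * x j) \<ge> log_scale \<epsilon> (real (a N))"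
proof (rule ccontr)
  define \<eta> where "\<eta> = log_scale \<epsilon> (real (a N))"
  define \<gamma> where "\<gamma> = log_scale \<epsilon>0 (real (a N))"
  define \<eta>' where "\<eta>' = \<eta> + m * \<gamma>"
  have \<gamma>_pos: "\<gamma> > 0" and \<eta>_pos: "\<eta> > 0" using log_scale_a_pos by (simp_all add: \<gamma>_def \<eta>_def)
  have \<eta>'_pos: "\<eta>' > 0" using \<gamma>_pos \<eta>_pos m by (simp add: \<eta>'_def add_pos_nonneg)
  have \<eta>'_small: "\<eta>' \<le> 1/4" and sep_bound: "m * \<eta>' + \<gamma> \<le> c / (2 * real (a N))"
    using exceptional_width_small[OF m \<epsilon> ln_big] by (simp_all add: \<eta>'_def \<eta>_def \<gamma>_def)
  have sep: "\<bar>x i - x j\<bar> \<ge> c / (2 * real (a N))"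
    using ij blocks_ge_2 by (intro dist_ge) auto
  have resonant: "\<alpha> \<in> exceptional m \<epsilon> N"
    if "d \<in> candidate_diffs N" "\<bar>\<alpha> * d - of_int k\<bar> < \<eta>'" "\<bar>d\<bar> \<ge> m * \<eta>'" for d k
    using mem_resonant_set[OF _ \<eta>'_pos \<eta>'_small that(3) \<alpha> that(2)] m that(1) N
    by (auto simp: exceptional_def \<eta>'_def \<eta>_def \<gamma>_def)
  assume "\<not> ?thesis"
  then have "dist_int (\<alpha> * (x i - x j)) < \<eta>" by (simp add: \<eta>_def algebra_simps)
  then obtain k :: int where k: "\<bar>\<alpha> * (x i - x j) - of_int k\<bar> < \<eta>" using dist_int_less_imp by blast
  show False
  proof (cases "a (N-1) < i \<and> a (N-1) < j")
    case True
    then have "i \<in> B N" "j \<in> B N" using mem_blocks_imp_mem_block ij N by auto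
    then obtain v where v: "v \<in> V N" "\<bar>x i - x j - \<gamma> * of_int v\<bar> < \<gamma>"
      using block_diffs[OF N] by (auto simp: \<gamma>_def)
    have "\<bar>\<alpha>\<bar> * \<bar>x i - x j - \<gamma> * of_int v\<bar> \<le> m * \<gamma>" using \<alpha> v(2) by (intro mult_mono) auto
    moreover have "\<bar>\<alpha> * (\<gamma> * of_int v) - of_int k\<bar>
        \<le> \<bar>\<alpha> * (x i - x j) - of_int k\<bar> + \<bar>\<alpha>\<bar> * \<bar>x i - x j - \<gamma> * of_int v\<bar>"
    proof -
      have "\<alpha> * (\<gamma> * of_int v) - of_int k
          = (\<alpha> * (x i - x j) - of_int k) - \<alpha> * (x i - x j - \<gamma> * of_int v)"
        by (simp add: algebra_simps)
      then show ?thesis by (simp add: abs_mult[symmetric] abs_triangle_ineq4)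
    qed
    ultimately have "\<bar>\<alpha> * (\<gamma> * of_int v) - of_int k\<bar> < \<eta>'" using k unfolding \<eta>'_def by linarith
    moreover have "\<bar>\<gamma> * of_int v\<bar> \<ge> m * \<eta>'" using v(2) sep sep_bound by linarith
    moreover have "\<gamma> * of_int v \<in> candidate_diffs N"
      using v(1) unfolding candidate_diffs_def \<gamma>_def by (intro UnI1 imageI)
    ultimately show False using resonant not_exc by blast
  next
    case False
    then have "(i, j) \<in> {1..a N} \<times> {1..a (N-1)} \<union> {1..a (N-1)} \<times> {1..a N}"
      using new ij blocks_ge_2[of i] blocks_ge_2[of j] by auto
    then have "x i - x j \<in> candidate_diffs N" by (force simp: candidate_diffs_def)
    moreover have "\<bar>\<alpha> * (x i - x j) - of_int k\<bar> < \<eta>'"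
      using k mult_nonneg_nonneg[of m \<gamma>] \<gamma>_pos m unfolding \<eta>'_def by linarith
    moreover have "\<bar>x i - x j\<bar> \<ge> m * \<eta>'" using sep sep_bound \<gamma>_pos by linarith
    ultimately show False using resonant not_exc by blast
  qed
qed

lemma AE_eventually_separated:
  assumes m: "m \<ge> 1" and \<epsilon>: "\<epsilon> > 0"
  shows "AE \<alpha> in lborel. 1/m \<le> \<bar>\<alpha>\<bar> \<and> \<bar>\<alpha>\<bar> \<le> m \<longrightarrow> (\<exists>N0. \<forall>N\<ge>N0.
      \<forall>i\<in>blocks. \<forall>j\<in>blocks. i \<noteq> j \<longrightarrow> i \<le> a N \<longrightarrow> j \<le> a N \<longrightarrow> (a (N-1) < i \<or> a (N-1) < j) \<longrightarrow>
        dist_int (\<alpha> * x i - \<alpha> * x j) \<ge> log_scale \<epsilon> (real (a N)))"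
  using AE_eventually_not_exceptional[OF assms]
proof (rule AE_mp, intro AE_I2 impI)
  fix \<alpha> :: real
  assume "eventually (\<lambda>N. \<alpha> \<notin> exceptional m \<epsilon> N) sequentially" and \<alpha>: "1/m \<le> \<bar>\<alpha>\<bar> \<and> \<bar>\<alpha>\<bar> \<le> m"
  then obtain N2 where N2: "\<And>N. N \<ge> N2 \<Longrightarrow> \<alpha> \<notin> exceptional m \<epsilon> N"
    by (auto simp: eventually_sequentially)
  define \<Lambda> where "\<Lambda> = max (4 * (1 + m)) (2 * (1 + m + m * m) / c)"
  have "ln (real (a N)) \<ge> \<Lambda>" if "N \<ge> max 1 (nat \<lceil>\<Lambda>\<rceil>)" for N
  proof -
    have "\<Lambda> \<le> real N" using that by linarith
    also have "\<dots> < 2^N" by (rule of_nat_less_two_power)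
    also have "\<dots> \<le> ln (real (a N))" using ln_a_ge_power that by simp
    finally show ?thesis by simp
  qed
  then show "\<exists>N0. \<forall>N\<ge>N0. \<forall>i\<in>blocks. \<forall>j\<in>blocks. i \<noteq> j \<longrightarrow> i \<le> a N \<longrightarrow> j \<le> a N \<longrightarrow>
      (a (N-1) < i \<or> a (N-1) < j) \<longrightarrow> dist_int (\<alpha> * x i - \<alpha> * x j) \<ge> log_scale \<epsilon> (real (a N))"
    using block_pair_separated[OF m \<epsilon>] \<alpha> N2
    by (intro exI[of _ "max N2 (max 1 (nat \<lceil>\<Lambda>\<rceil>))"]) (auto simp: \<Lambda>_def)
qed

text \<open>Only finitely many pairs are not covered by the eventual bound, and for each of them
  \<parallel>\<alpha>(x i - x j)\<parallel> > 0, so a uniform constant C works at every level.\<close>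

lemma uniform_separation:
  assumes \<epsilon>: "\<epsilon> > 0"
    and pos: "\<And>i j. i \<in> blocks \<Longrightarrow> j \<in> blocks \<Longrightarrow> i \<noteq> j \<Longrightarrow> dist_int (\<alpha> * x i - \<alpha> * x j) > 0"
    and N0: "\<And>N i j. N \<ge> N0 \<Longrightarrow> i \<in> blocks \<Longrightarrow> j \<in> blocks \<Longrightarrow> i \<noteq> j \<Longrightarrow> i \<le> a N \<Longrightarrow> j \<le> a N \<Longrightarrow>
       a (N-1) < i \<or> a (N-1) < j \<Longrightarrow> dist_int (\<alpha> * x i - \<alpha> * x j) \<ge> log_scale \<epsilon> (real (a N))"
  shows "\<exists>C>0. \<forall>N\<ge>1. \<forall>i\<in>blocks. \<forall>j\<in>blocks. i \<noteq> j \<longrightarrow> i \<le> a N \<longrightarrow> j \<le> a N \<longrightarrow>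
           dist_int (\<alpha> * x i - \<alpha> * x j) \<ge> C * log_scale \<epsilon> (real (a N))"
proof -
  define N1 where "N1 = max N0 1"
  define D where "D = (\<lambda>(i,j). dist_int (\<alpha> * x i - \<alpha> * x j)) `
      {(i,j) \<in> {..a N1} \<times> {..a N1}. i \<in> blocks \<and> j \<in> blocks \<and> i \<noteq> j}"
  define C where "C = Min (insert 1 D)"
  have fD: "finite D"
    unfolding D_def by (rule finite_imageI, rule finite_subset[of _ "{..a N1} \<times> {..a N1}"]) auto
  have C_pos: "C > 0" using fD pos by (auto simp: C_def D_def)
  have C_le: "C \<le> 1" "\<And>d. d \<in> D \<Longrightarrow> C \<le> d" using fD by (auto simp: C_def)
  have \<eta>_le_1: "log_scale \<epsilon> (real (a N)) \<le> 1" for N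
  proof -
    have "1 * 1 \<le> real (a N) * ln (real (a N))" using a_ge_3[of N] ln_a_ge_1[of N] by (intro mult_mono) auto
    then have "1 / (real (a N) * ln (real (a N))) \<le> 1" by simp
    then show ?thesis using log_scale_a_le[of \<epsilon> N] \<epsilon> by linarith
  qed
  have "dist_int (\<alpha> * x i - \<alpha> * x j) \<ge> C * log_scale \<epsilon> (real (a N))"
    if N: "N \<ge> 1" and ij: "i \<in> blocks" "j \<in> blocks" "i \<noteq> j" "i \<le> a N" "j \<le> a N" for N i j
  proof (cases "i \<le> a N1 \<and> j \<le> a N1")
    case True
    then have "C \<le> dist_int (\<alpha> * x i - \<alpha> * x j)" using ij C_le(2) by (force simp: D_def)
    moreover have "C * log_scale \<epsilon> (real (a N)) \<le> C" using C_pos \<eta>_le_1 by (simp add: mult_le_cancel_left1)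
    ultimately show ?thesis by linarith
  next
    case False
    define M where "M = (LEAST M. max i j \<le> a M)"
    have M: "max i j \<le> a M" "M \<le> N"
      unfolding M_def by (rule LeastI[of "\<lambda>M. max i j \<le> a M" N], use ij in simp,
        rule Least_le, use ij in simp)
    have "N1 < M"
      using False M(1) strict_mono_less_eq[OF strict_mono_a, of M N1] by (auto simp: not_less)
    then have "\<not> max i j \<le> a (M-1)" unfolding M_def by (intro not_less_Least) simp
    then have "dist_int (\<alpha> * x i - \<alpha> * x j) \<ge> log_scale \<epsilon> (real (a M))"
      using N0[of M i j] ij M(1) \<open>N1 < M\<close> by (auto simp: N1_def)
    moreover have "log_scale \<epsilon> (real (a N)) \<le> log_scale \<epsilon> (real (a M))"
      using a_ge_3[of M] \<epsilon> M(2) strict_mono_less_eq[OF strict_mono_a] by (intro log_scale_antimono) auto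
    moreover have "C * log_scale \<epsilon> (real (a N)) \<le> log_scale \<epsilon> (real (a N))"
      using C_le(1) log_scale_a_pos[of \<epsilon> N] by (simp add: mult_le_cancel_right1)
    ultimately show ?thesis by linarith
  qed
  then show ?thesis using C_pos by blast
qed

lemma AE_uniform_separation:
  assumes \<epsilon>: "\<epsilon> > 0"
  shows "AE \<alpha> in lborel. \<exists>C>0. \<forall>N\<ge>1. \<forall>k\<ge>1. \<forall>l\<ge>1. k \<noteq> l \<longrightarrow> block_enum k \<le> a N \<longrightarrow> block_enum l \<le> a N \<longrightarrow>
     dist_int (\<alpha> * x (block_enum k) - \<alpha> * x (block_enum l)) \<ge> C * log_scale \<epsilon> (real (a N))"
proof -
  have "AE \<alpha> in lborel. \<forall>m::nat. 1/real (Suc m) \<le> \<bar>\<alpha>\<bar> \<and> \<bar>\<alpha>\<bar> \<le> real (Suc m) \<longrightarrow> (\<exists>N0. \<forall>N\<ge>N0.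
      \<forall>i\<in>blocks. \<forall>j\<in>blocks. i \<noteq> j \<longrightarrow> i \<le> a N \<longrightarrow> j \<le> a N \<longrightarrow> (a (N-1) < i \<or> a (N-1) < j) \<longrightarrow>
        dist_int (\<alpha> * x i - \<alpha> * x j) \<ge> log_scale \<epsilon> (real (a N)))"
    unfolding AE_all_countable using AE_eventually_separated \<epsilon> by simp
  moreover have "AE \<alpha> in lborel. \<alpha> \<noteq> 0" by (rule AE_lborel_singleton)
  ultimately show ?thesis
    using AE_dist_int_pos
  proof eventually_elim
    case (elim \<alpha>)
    define m where "m = nat \<lceil>\<bar>\<alpha>\<bar> + 1/\<bar>\<alpha>\<bar>\<rceil>"
    have \<alpha>_pos: "\<bar>\<alpha>\<bar> > 0" using elim by simp
    have m_ge: "real (Suc m) \<ge> \<bar>\<alpha>\<bar> + 1/\<bar>\<alpha>\<bar>" unfolding m_def by linarith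
    have "1/\<bar>\<alpha>\<bar> > 0" using \<alpha>_pos by simp
    then have "\<bar>\<alpha>\<bar> \<le> real (Suc m)" "1/\<bar>\<alpha>\<bar> \<le> real (Suc m)" using m_ge \<alpha>_pos by linarith+
    then have "1/real (Suc m) \<le> \<bar>\<alpha>\<bar> \<and> \<bar>\<alpha>\<bar> \<le> real (Suc m)"
      using \<alpha>_pos by (simp add: field_simps)
    from elim(1)[rule_format, OF this] obtain N0 where N0: "\<forall>N\<ge>N0. \<forall>i\<in>blocks. \<forall>j\<in>blocks.
        i \<noteq> j \<longrightarrow> i \<le> a N \<longrightarrow> j \<le> a N \<longrightarrow> (a (N-1) < i \<or> a (N-1) < j) \<longrightarrow>
        dist_int (\<alpha> * x i - \<alpha> * x j) \<ge> log_scale \<epsilon> (real (a N))"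
      by blast
    have pos: "dist_int (\<alpha> * x i - \<alpha> * x j) > 0" if "i \<in> blocks" "j \<in> blocks" "i \<noteq> j" for i j
      using elim(3) blocks_ge_2[OF that(1)] blocks_ge_2[OF that(2)] that(3) by blast
    obtain C where "C > 0" and C: "\<forall>N\<ge>1. \<forall>i\<in>blocks. \<forall>j\<in>blocks. i \<noteq> j \<longrightarrow> i \<le> a N \<longrightarrow> j \<le> a N \<longrightarrow>
           dist_int (\<alpha> * x i - \<alpha> * x j) \<ge> C * log_scale \<epsilon> (real (a N))"
      using uniform_separation[OF \<epsilon> pos N0[rule_format]] by blast
    show ?case
    proof (intro exI[of _ C] conjI allI impI)
      fix N k l assume "N \<ge> 1" "k \<ge> 1" "l \<ge> 1" "k \<noteq> l" "block_enum k \<le> a N" "block_enum l \<le> a N"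
      then show "dist_int (\<alpha> * x (block_enum k) - \<alpha> * x (block_enum l)) \<ge> C * log_scale \<epsilon> (real (a N))"
        using C block_enum_in_blocks block_enum_eq_iff by simp
    qed (rule \<open>C > 0\<close>)
  qed
qed

end

theorem corollary1:
  fixes x :: "nat \<Rightarrow> real" and c \<epsilon>0 r :: real
  assumes c_pos: "c > 0"
    and gaps: "\<And>n. n \<ge> 1 \<Longrightarrow> x (Suc n) - x n \<ge> c * ln (real n) / real n"
    and eps0_pos: "\<epsilon>0 > 0"
    and r_pos: "r > 0"
    and energy: "\<And>N. N \<ge> 2 \<Longrightarrow>
       real (add_energy x N (1 / (real N * ln (real N) powr (1 + \<epsilon>0)))) \<ge> r * real N ^ 3"
  shows "\<exists>(nk :: nat \<Rightarrow> nat) (a :: nat \<Rightarrow> nat).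
     strict_mono_on {1..} nk \<and> strict_mono_on {1..} a \<and> nk 1 \<ge> 1 \<and> a 1 \<ge> 1
     \<and> (\<exists>c' > 0. \<forall>N \<ge> 1. real (card {k. k \<ge> 1 \<and> nk k \<le> a N}) \<ge> c' * real (a N))
     \<and> (\<forall>\<epsilon> > 0. AE \<alpha> in lborel. \<exists>C > 0. \<forall>N \<ge> 1. \<forall>k \<ge> 1. \<forall>l \<ge> 1.
          k \<noteq> l \<longrightarrow> nk k \<le> a N \<longrightarrow> nk l \<le> a N \<longrightarrow>
          dist_int (\<alpha> * x (nk k) - \<alpha> * x (nk l))
            \<ge> C / (real (a N) * ln (real (a N)) powr (1 + \<epsilon>)))"
proof -
  interpret log_gap_sequence x c by unfold_locales (use c_pos gaps in auto)
  have "\<And>N. N \<ge> 2 \<Longrightarrow> real (add_energy x N (log_scale \<epsilon>0 (real N))) \<ge> r * real N ^ 3"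
    using energy by (simp add: log_scale_def)
  then obtain a B V K c1 where "gap_blocks x c a B V K \<epsilon>0 c1"
    using exists_gap_blocks[OF eps0_pos r_pos] by blast
  then interpret gap_blocks x c a B V K \<epsilon>0 c1 .
  show ?thesis
  proof (rule exI[of _ block_enum], rule exI[of _ a], intro conjI)
    show "strict_mono_on {1..} block_enum" by (rule strict_mono_on_block_enum)
    show "strict_mono_on {1..} a" using strict_mono_a by (simp add: strict_mono_on_def strict_mono_def)
    show "block_enum 1 \<ge> 1" using blocks_ge_2[OF block_enum_in_blocks[of 1]] by simp
    show "a 1 \<ge> 1" using a_ge_3[of 1] by simp
    show "\<exists>c' > 0. \<forall>N \<ge> 1. real (card {k. k \<ge> 1 \<and> block_enum k \<le> a N}) \<ge> c' * real (a N)"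
      using c1_pos card_block_enum_le by blast
  qed (use AE_uniform_separation in \<open>simp add: log_scale_def\<close>)
qed

end
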